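(* Let $s>1$. Then $k^\lambda\to k$ in the norm of $B(\mathscr{H}_s,\mathscr{H}_{-s})$ as $\lambda\downarrow0$.
   Context: $\mathscr{H}_s=\{u:(1+|x|^2)^{s/2}u\in L^2(\mathbb{R}^2)\}$. For $\lambda>0$, $g^\lambda(x)=\frac{1}{2\pi}K_0(\lambda^{1/2}|x|)$ is the convolution kernel of $(-\Delta+\lambda)^{-1}$ on $\mathbb{R}^2$ ($K_0$ the modified Bessel function). Fix a unit vector $u\in\mathbb{R}^2$. $k(x)=\frac{1}{2\pi}\log\frac{1}{|x|}$ and $k^\lambda(x)=g^\lambda(x)-g^\lambda(u)$; $k$ and $k^\lambda$ also denote the corresponding convolution operators. *)

theory Defs
  imports "HOL-Analysis.Analysis"
begin

text \<open>Modified Bessel function K_0 for z > 0, via its integral representation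
  K_0(z) = int_0^infinity exp(-z cosh t) dt.\<close>
definition K0 :: "real \<Rightarrow> real" where
  "K0 z = (LINT t|lborel. indicator {0..} t * exp (- z * cosh t))"

text \<open>Kernel of the resolvent (-Delta + lam)^(-1) on R^2.\<close>
definition gker :: "real \<Rightarrow> real^2 \<Rightarrow> real" where
  "gker lam x = 1 / (2 * pi) * K0 (sqrt lam * norm x)"

definition kker :: "real^2 \<Rightarrow> real" where
  "kker x = 1 / (2 * pi) * ln (1 / norm x)"

definition klam :: "real \<Rightarrow> real^2 \<Rightarrow> real^2 \<Rightarrow> real" where
  "klam lam u x = gker lam x - gker lam u"

definition Hs :: "real \<Rightarrow> (real^2 \<Rightarrow> complex) set" where
  "Hs s = {f. f \<in> borel_measurable lebesgue \<and>
     integrable lebesgue (\<lambda>x. (1 + (norm x)\<^sup>2) powr s * (cmod (f x))\<^sup>2)}"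

definition Hnorm :: "real \<Rightarrow> (real^2 \<Rightarrow> complex) \<Rightarrow> real" where
  "Hnorm s f = sqrt (LINT x|lebesgue. (1 + (norm x)\<^sup>2) powr s * (cmod (f x))\<^sup>2)"

definition conv :: "(real^2 \<Rightarrow> real) \<Rightarrow> (real^2 \<Rightarrow> complex) \<Rightarrow> real^2 \<Rightarrow> complex" where
  "conv K f x = (LINT y|lebesgue. complex_of_real (K (x - y)) * f y)"

end

theory Submission
  imports Defs "HOL-Real_Asymp.Real_Asymp"
begin

text \<open>
  Fix \<alpha> = min 1 ((s-1)/2) and the majorant P(z) = 1 + |z|^{2\<alpha>} + |z|^{-\<alpha>}. The proof is a
  weighted Hilbert--Schmidt argument:
  \<^item> Any Borel kernel K with K(z)^2 \<le> c P(z) defines a bounded operator H_s \<rightarrow> H_{-s} of norm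
    at most sqrt (c M), where M = \<integral>\<integral> w_s(x) w_s(y) P(x-y) dx dy with w_s = (1+|x|^2)^{-s};
    this follows from the Cauchy--Schwarz inequality, and M < \<infinity> because (1+|x|^2)^{-\<sigma>} is
    integrable for \<sigma> > 1, |z|^{-\<alpha>} is locally integrable, and |x-y|^{2\<alpha>} is absorbed by
    the weights (Tonelli and a comparison with products of one-dimensional integrals).
  \<^item> From K0' = -K1 and e^{-t}/t \<le> K1(t) \<le> e^{-t}/t + e^{-t}, the function \<psi>(t) = K0(t) + ln t
    satisfies |\<psi>(b) - \<psi>(a)| \<le> (b^\<alpha> - a^\<alpha>)/\<alpha>. Since k^\<lambda>(z) - k(z) = (\<psi>(\<surd>\<lambda>|z|) - \<psi>(\<surd>\<lambda>))/(2\<pi>),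
    this gives (k^\<lambda> - k)(z)^2 \<le> \<lambda>^\<alpha> P(z)/(\<pi>\<alpha>)^2, while k^2 \<le> 2 P/(\<pi>\<alpha>)^2.
  Hence all operators are bounded and ||k^\<lambda> - k|| \<le> C \<lambda>^{\<alpha>/2} \<rightarrow> 0.
  The file develops, in this order: one-dimensional integrals, the weighted majorant integral,
  the Bessel function estimates, the kernel bounds, the operator bound, and the theorem.
\<close>

lemma nn_integral_reflect_translate:
  fixes f :: "'a::euclidean_space \<Rightarrow> ennreal"
  assumes [measurable]: "f \<in> borel_measurable borel"
  shows "(\<integral>\<^sup>+y. f (x - y) \<partial>lborel) = (\<integral>\<^sup>+y. f y \<partial>lborel)"
proof -
  have "(\<integral>\<^sup>+y. f y \<partial>lborel) = (\<integral>\<^sup>+y. f y \<partial>(density (distr lborel borel (\<lambda>y. x + (-1) *\<^sub>R y)) (\<lambda>_. \<bar>-1::real\<bar>^DIM('a))))"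
    using lborel_affine[of "-1::real" x] by simp
  also have "\<dots> = (\<integral>\<^sup>+y. f (x - y) \<partial>lborel)"
    by (simp add: nn_integral_density nn_integral_distr)
  finally show ?thesis ..
qed

lemma hyperplane_null:
  fixes b :: "'a::euclidean_space"
  assumes "b \<in> Basis"
  shows "{z. z \<bullet> b = 0} \<in> null_sets lborel"
proof -
  have "negligible {z::'a. z \<bullet> b = 0}" using negligible_standard_hyperplane[OF assms] .
  then have "{z::'a. z \<bullet> b = 0} \<in> null_sets lebesgue" using negligible_iff_null_sets by blast
  moreover have "{z::'a. z \<bullet> b = 0} \<in> sets lborel" by measurable
  ultimately show ?thesis using null_sets_completion_iff by blast
qed

text \<open>Almost every point has no vanishing coordinate; this allows comparing |z|^{-\<alpha>}
  with a product of one-dimensional singularities.\<close>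
lemma AE_coords_nonzero:
  "AE z in (lborel::'a::euclidean_space measure). \<forall>b\<in>Basis. z \<bullet> b \<noteq> 0"
proof -
  have "(\<Union>b\<in>Basis. {z::'a. z \<bullet> b = 0}) \<in> null_sets lborel"
    using hyperplane_null by (intro null_sets_UN') (auto intro: countable_finite)
  then show ?thesis
    by (rule AE_I') auto
qed

lemma nn_integral_FTC_interval:
  fixes f F :: "real \<Rightarrow> real"
  assumes "a \<le> b" and d: "\<And>x. x \<in> {a..b} \<Longrightarrow> (F has_real_derivative f x) (at x)"
    and nn: "\<And>x. x \<in> {a..b} \<Longrightarrow> 0 \<le> f x"
  shows "(\<integral>\<^sup>+t. ennreal (f t) * indicator {a..b} t \<partial>lborel) = ennreal (F b - F a)"
proof -
  have "(f has_integral (F b - F a)) {a..b}"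
    using assms(1) d by (intro fundamental_theorem_of_calculus)
      (auto simp: has_real_derivative_iff_has_vector_derivative[symmetric] intro: has_field_derivative_at_within)
  from nn_integral_has_integral_lebesgue[OF nn this]
  have "(\<integral>\<^sup>+t. ennreal (indicator {a..b} t * f t) \<partial>lborel) = ennreal (F b - F a)" by simp
  moreover have "\<And>t. ennreal (indicator {a..b} t * f t) = ennreal (f t) * indicator {a..b} t"
    by (auto simp: indicator_def)
  ultimately show ?thesis by simp
qed

lemma nn_integral_powr_unit_interval:
  assumes "0 \<le> \<beta>" "\<beta> < 1"
  shows "(\<integral>\<^sup>+t. ennreal (indicator {0..1} t * t powr (-\<beta>)) \<partial>lborel) = ennreal (1/(1-\<beta>))"
proof -
  have "((\<lambda>x. x powr (-\<beta>)) has_integral (1 powr (-\<beta>+1) / (-\<beta>+1))) {0..1::real}"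
    by (rule has_integral_powr_from_0) (use assms in auto)
  from nn_integral_has_integral_lebesgue[OF _ this]
  show ?thesis by (simp add: diff_minus_eq_add add.commute)
qed

lemma nn_integral_powr_tail:
  assumes "\<sigma> > 1"
  shows "(\<integral>\<^sup>+t. ennreal ((1+t) powr (-\<sigma>)) * indicator {0..} t \<partial>lborel) = ennreal (1/(\<sigma>-1))"
proof -
  define F where "F = (\<lambda>t::real. - ((1+t) powr (1-\<sigma>)) / (\<sigma>-1))"
  have "(\<integral>\<^sup>+t. ennreal ((1+t) powr (-\<sigma>)) * indicator {0..} t \<partial>lborel)
     = 0 - F 0"
  proof (rule nn_integral_FTC_atLeast)
    show "(\<lambda>t. (1+t) powr (-\<sigma>)) \<in> borel_measurable borel" by measurable
    show "(F \<longlongrightarrow> 0) at_top"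
      using assms unfolding F_def by real_asymp
    fix x :: real assume x: "0 \<le> x"
    show "0 \<le> (1+x) powr (-\<sigma>)" by simp
    have "((\<lambda>t. (1+t) powr (1-\<sigma>)) has_real_derivative (1-\<sigma>) * (1+x) powr (-\<sigma>)) (at x)"
      using x by (auto intro!: derivative_eq_intros)
    then have "(F has_real_derivative -((1-\<sigma>) * (1+x) powr (-\<sigma>)) / (\<sigma>-1)) (at x)"
      unfolding F_def by (intro DERIV_cdivide DERIV_minus)
    moreover have "-((1-\<sigma>) * (1+x) powr (-\<sigma>)) / (\<sigma>-1) = (1+x) powr (-\<sigma>)"
      using assms by (simp add: field_simps)
    ultimately show "(F has_real_derivative (1+x) powr (-\<sigma>)) (at x)" by simp
  qed
  then show ?thesis by (simp add: F_def)
qed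

lemma nn_integral_exp_tail:
  assumes "c > 0"
  shows "(\<integral>\<^sup>+u. ennreal (exp (-c*u)) * indicator {0..} u \<partial>lborel) = ennreal (1/c)"
proof -
  define F where "F = (\<lambda>u::real. - exp (-c*u) / c)"
  have "(\<integral>\<^sup>+u. ennreal (exp (-c*u)) * indicator {0..} u \<partial>lborel) = 0 - F 0"
  proof (rule nn_integral_FTC_atLeast)
    show "(F \<longlongrightarrow> 0) at_top" unfolding F_def using assms by real_asymp
    fix x :: real assume "0 \<le> x"
    show "(F has_real_derivative exp (-c*x)) (at x)"
      unfolding F_def using assms by (auto intro!: derivative_eq_intros simp: field_simps)
  qed auto
  then show ?thesis by (simp add: F_def)
qed

lemma nn_integral_even_le:
  fixes h :: "real \<Rightarrow> real"
  assumes [measurable]: "h \<in> borel_measurable borel" and nn: "\<And>t. 0 \<le> h t"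
  shows "(\<integral>\<^sup>+t. ennreal (h \<bar>t\<bar>) \<partial>lborel) \<le> 2 * (\<integral>\<^sup>+t. ennreal (h t) * indicator {0..} t \<partial>lborel)"
proof -
  define A where "A = (\<lambda>t. ennreal (h t) * indicator {0..} t)"
  have [measurable]: "A \<in> borel_measurable borel" unfolding A_def by measurable
  have "(\<integral>\<^sup>+t. ennreal (h \<bar>t\<bar>) \<partial>lborel) \<le> (\<integral>\<^sup>+t. A t + A (0 - t) \<partial>lborel)"
    by (intro nn_integral_mono) (auto simp: A_def indicator_def)
  also have "\<dots> = (\<integral>\<^sup>+t. A t \<partial>lborel) + (\<integral>\<^sup>+t. A (0 - t) \<partial>lborel)"
    by (intro nn_integral_add) auto
  also have "(\<integral>\<^sup>+t. A (0 - t) \<partial>lborel) = (\<integral>\<^sup>+t. A t \<partial>lborel)"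
    by (rule nn_integral_reflect_translate) measurable
  finally show ?thesis unfolding A_def by (simp add: mult_2)
qed

lemma nn_integral_abs_powr_finite:
  assumes "\<sigma> > 1"
  shows "(\<integral>\<^sup>+t. ennreal ((1+\<bar>t\<bar>) powr (-\<sigma>)) \<partial>lborel) < \<infinity>"
proof -
  have "(\<integral>\<^sup>+t. ennreal ((1+\<bar>t\<bar>) powr (-\<sigma>)) \<partial>lborel) \<le> 2 * ennreal (1/(\<sigma>-1))"
    using nn_integral_even_le[of "\<lambda>t. (1+t) powr (-\<sigma>)"] nn_integral_powr_tail[OF assms] by simp
  also have "\<dots> < \<infinity>" by (simp add: ennreal_mult_less_top)
  finally show ?thesis .
qed

lemma nn_integral_local_abs_powr_finite:
  assumes "0 \<le> \<beta>" "\<beta> < 1"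
  shows "(\<integral>\<^sup>+t. ennreal (indicator {-1..1} t * \<bar>t\<bar> powr (-\<beta>)) \<partial>lborel) < \<infinity>"
proof -
  have "(\<integral>\<^sup>+t. ennreal (indicator {-1..1} t * \<bar>t\<bar> powr (-\<beta>)) \<partial>lborel)
     = (\<integral>\<^sup>+t. ennreal ((\<lambda>t. indicator {-1..1} t * \<bar>t\<bar> powr (-\<beta>)) \<bar>t\<bar>) \<partial>lborel)"
    by (intro nn_integral_cong) (auto simp: indicator_def)
  also have "\<dots> \<le> 2 * (\<integral>\<^sup>+t. ennreal (indicator {-1..1} t * \<bar>t\<bar> powr (-\<beta>)) * indicator {0..} t \<partial>lborel)"
    by (rule nn_integral_even_le) auto
  also have "(\<integral>\<^sup>+t. ennreal (indicator {-1..1} t * \<bar>t\<bar> powr (-\<beta>)) * indicator {0..} t \<partial>lborel)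
      = (\<integral>\<^sup>+t. ennreal (indicator {0..1} t * t powr (-\<beta>)) \<partial>lborel)"
    by (intro nn_integral_cong) (auto simp: indicator_def)
  also have "\<dots> = ennreal (1/(1-\<beta>))" by (rule nn_integral_powr_unit_interval[OF assms])
  finally show ?thesis by (simp add: ennreal_mult_less_top le_less_trans)
qed

text \<open>The weight of the space H_{-s}: the squared H_{-s} norm of u is the integral of
  weight s x * |u x|^2, and weight (-s) gives the H_s norm.\<close>
definition weight :: "real \<Rightarrow> real^2 \<Rightarrow> real" where
  "weight s x = (1 + (norm x)\<^sup>2) powr (-s)"

definition local_singularity :: "real \<Rightarrow> real^2 \<Rightarrow> real" where
  "local_singularity \<alpha> z = indicator {z. norm z < 1} z * norm z powr (-\<alpha>)"

lemma one_plus_sq_pos: "1 + (norm (x::'a::real_normed_vector))\<^sup>2 > 0"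
  by (metis add_pos_nonneg zero_le_power2 zero_less_one)

lemma powr_neg_le1: "1 \<le> (x::real) \<Longrightarrow> 0 \<le> a \<Longrightarrow> x powr (-a) \<le> 1"
  by (simp add: powr_minus ge_one_powr_ge_zero divide_simps)

lemma weight_pos: "weight s x > 0"
  using one_plus_sq_pos[of x] by (simp add: weight_def)

lemma weight_le_one: "s \<ge> 0 \<Longrightarrow> weight s x \<le> 1"
  unfolding weight_def by (rule powr_neg_le1) auto

lemma weight_measurable[measurable]: "weight s \<in> borel_measurable borel"
  unfolding weight_def by measurable

lemma local_singularity_measurable[measurable]: "local_singularity \<alpha> \<in> borel_measurable borel"
  unfolding local_singularity_def by measurable

lemma local_singularity_nonneg: "local_singularity \<alpha> z \<ge> 0"
  unfolding local_singularity_def by simp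

text \<open>Since (1 + |x|)^2 \<le> 2 (1 + |x|^2), the weight is dominated by a product of
  one-dimensional weights in the coordinates, which reduces its integral to Tonelli.\<close>
lemma weight_le_coordinate_product:
  fixes x :: "real^2"
  assumes "\<sigma> \<ge> 0"
  shows "weight \<sigma> x \<le> 2 powr \<sigma> * (\<Prod>b\<in>Basis. (1 + \<bar>x \<bullet> b\<bar>) powr (-\<sigma>))"
proof -
  define P where "P = (\<Prod>b\<in>(Basis::(real^2) set). 1 + \<bar>x \<bullet> b\<bar>)"
  have P_pos: "P > 0" unfolding P_def by (intro prod_pos) auto
  have "P \<le> (\<Prod>b\<in>(Basis::(real^2) set). 1 + norm x)"
    unfolding P_def by (intro prod_mono) (auto simp: Basis_le_norm)
  also have "\<dots> = (1 + norm x)\<^sup>2" by simp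
  also have "\<dots> \<le> 2 * (1 + (norm x)\<^sup>2)"
    using zero_le_power2[of "1 - norm x"] by (simp add: power2_eq_square algebra_simps)
  finally have "(2 * (1 + (norm x)\<^sup>2)) powr (-\<sigma>) \<le> P powr (-\<sigma>)"
    using assms P_pos by (intro powr_mono2') auto
  moreover have "(2 * (1 + (norm x)\<^sup>2)) powr (-\<sigma>) = 2 powr (-\<sigma>) * weight \<sigma> x"
    unfolding weight_def by (rule powr_mult)
  ultimately have bound: "2 powr (-\<sigma>) * weight \<sigma> x \<le> (\<Prod>b\<in>Basis. (1 + \<bar>x \<bullet> b\<bar>) powr (-\<sigma>))"
    unfolding P_def by (simp add: prod_powr_distrib)
  have "weight \<sigma> x = 2 powr \<sigma> * (2 powr (-\<sigma>) * weight \<sigma> x)"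
    by (simp add: mult.assoc[symmetric] powr_add[symmetric])
  also have "\<dots> \<le> 2 powr \<sigma> * (\<Prod>b\<in>Basis. (1 + \<bar>x \<bullet> b\<bar>) powr (-\<sigma>))"
    using bound by (intro mult_left_mono) auto
  finally show ?thesis .
qed

lemma weight_nn_integral_finite:
  assumes "\<sigma> > 1"
  shows "(\<integral>\<^sup>+x. ennreal (weight \<sigma> x) \<partial>lborel) < \<infinity>"
proof -
  let ?R = "\<integral>\<^sup>+t. ennreal ((1 + \<bar>t\<bar>) powr (-\<sigma>)) \<partial>lborel"
  have "(\<integral>\<^sup>+x. ennreal (weight \<sigma> x) \<partial>lborel)
     \<le> (\<integral>\<^sup>+(x::real^2). ennreal (2 powr \<sigma>) * ennreal (\<Prod>b\<in>Basis. (1 + \<bar>x \<bullet> b\<bar>) powr (-\<sigma>)) \<partial>lborel)"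
    using assms weight_le_coordinate_product[of \<sigma>]
    by (intro nn_integral_mono) (auto simp: ennreal_mult[symmetric] prod_nonneg intro!: ennreal_leI)
  also have "\<dots> = ennreal (2 powr \<sigma>)
      * (\<integral>\<^sup>+(x::real^2). (\<Prod>b\<in>Basis. ennreal ((1 + \<bar>x \<bullet> b\<bar>) powr (-\<sigma>))) \<partial>lborel)"
    by (subst nn_integral_cmult) (auto simp: prod_ennreal)
  also have "(\<integral>\<^sup>+(x::real^2). (\<Prod>b\<in>Basis. ennreal ((1 + \<bar>x \<bullet> b\<bar>) powr (-\<sigma>))) \<partial>lborel)
      = (\<Prod>b\<in>(Basis::(real^2) set). ?R)"
    by (rule nn_integral_lborel_prod) auto
  also have "ennreal (2 powr \<sigma>) * (\<Prod>b\<in>(Basis::(real^2) set). ?R) < \<infinity>"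
    using nn_integral_abs_powr_finite[OF assms]
    by (simp add: ennreal_mult_less_top power2_eq_square)
  finally show ?thesis .
qed

lemma local_singularity_le_coordinate_product:
  fixes z :: "real^2"
  assumes "\<alpha> \<ge> 0" and nz: "\<forall>b\<in>Basis. z \<bullet> b \<noteq> 0"
  shows "local_singularity \<alpha> z \<le> (\<Prod>b\<in>Basis. indicator {-1..1} (z \<bullet> b) * \<bar>z \<bullet> b\<bar> powr (-(\<alpha>/2)))"
proof (cases "norm z < 1")
  case False
  then show ?thesis by (simp add: local_singularity_def prod_nonneg)
next
  case True
  have "norm z powr (-\<alpha>) = (norm z powr (-(\<alpha>/2)))\<^sup>2"
    by (simp add: powr_powr[symmetric] power2_eq_square powr_add[symmetric])
  also have "\<dots> = (\<Prod>b\<in>(Basis::(real^2) set). norm z powr (-(\<alpha>/2)))" by simp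
  also have "\<dots> \<le> (\<Prod>b\<in>Basis. indicator {-1..1} (z \<bullet> b) * \<bar>z \<bullet> b\<bar> powr (-(\<alpha>/2)))"
  proof (intro prod_mono conjI)
    fix b :: "real^2" assume b: "b \<in> Basis"
    have le: "\<bar>z \<bullet> b\<bar> \<le> norm z" using b by (simp add: Basis_le_norm)
    have "\<bar>z \<bullet> b\<bar> > 0" using nz b by auto
    then have "norm z powr (-(\<alpha>/2)) \<le> \<bar>z \<bullet> b\<bar> powr (-(\<alpha>/2))"
      using le assms by (intro powr_mono2') auto
    moreover have "z \<bullet> b \<in> {-1..1}" using le True by auto
    ultimately show "norm z powr (-(\<alpha>/2)) \<le> indicator {-1..1} (z \<bullet> b) * \<bar>z \<bullet> b\<bar> powr (-(\<alpha>/2))"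
      by simp
  qed simp
  finally show ?thesis using True by (simp add: local_singularity_def)
qed

lemma local_singularity_nn_integral_finite:
  assumes "0 \<le> \<alpha>" "\<alpha> < 2"
  shows "(\<integral>\<^sup>+z. ennreal (local_singularity \<alpha> z) \<partial>lborel) < \<infinity>"
proof -
  define g where "g = (\<lambda>t::real. indicator {-1..1} t * \<bar>t\<bar> powr (-(\<alpha>/2)))"
  have "(\<integral>\<^sup>+z. ennreal (local_singularity \<alpha> z) \<partial>lborel)
     \<le> (\<integral>\<^sup>+(z::real^2). (\<Prod>b\<in>Basis. ennreal (g (z \<bullet> b))) \<partial>lborel)"
  proof (intro nn_integral_mono_AE)
    show "AE (z::real^2) in lborel. ennreal (local_singularity \<alpha> z) \<le> (\<Prod>b\<in>Basis. ennreal (g (z \<bullet> b)))"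
      using AE_coords_nonzero[where 'a="real^2"]
    proof eventually_elim
      case (elim z)
      have "ennreal (local_singularity \<alpha> z) \<le> ennreal (\<Prod>b\<in>Basis. g (z \<bullet> b))"
        unfolding g_def using local_singularity_le_coordinate_product[OF assms(1) elim]
        by (rule ennreal_leI)
      also have "\<dots> = (\<Prod>b\<in>Basis. ennreal (g (z \<bullet> b)))"
        by (subst prod_ennreal) (auto simp: g_def)
      finally show ?case .
    qed
  qed
  also have "\<dots> = (\<Prod>b\<in>(Basis::(real^2) set). (\<integral>\<^sup>+t. ennreal (g t) \<partial>lborel))"
    by (rule nn_integral_lborel_prod) (auto simp: g_def)
  also have "\<dots> < \<infinity>"
    using nn_integral_local_abs_powr_finite[of "\<alpha>/2"] assms
    by (simp add: g_def ennreal_mult_less_top power2_eq_square)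
  finally show ?thesis .
qed

text \<open>The majorant 1 + |z|^{2\<alpha>} + |z|^{-\<alpha>}: for 0 < \<alpha>, the squares of all kernels of
  the theorem are bounded by multiples of it (logarithmic growth at 0 and at infinity).\<close>
definition logmaj :: "real \<Rightarrow> real^2 \<Rightarrow> real" where
  "logmaj \<alpha> z = 1 + norm z powr (2*\<alpha>) + norm z powr (-\<alpha>)"

lemma logmaj_measurable[measurable]: "logmaj a \<in> borel_measurable borel"
  unfolding logmaj_def by measurable

lemma logmaj_nonneg: "logmaj a z \<ge> 0"
  by (simp add: logmaj_def add_nonneg_nonneg)

lemma norm_diff_powr_le:
  fixes x y :: "'a::real_normed_vector"
  assumes a: "\<alpha> \<ge> 0"
  shows "norm (x - y) powr (2*\<alpha>) \<le> (1 + (norm x)\<^sup>2) powr \<alpha> * (1 + (norm y)\<^sup>2) powr \<alpha>"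
proof -
  have "(norm (x - y))\<^sup>2 \<le> (norm x + norm y)\<^sup>2"
    using norm_triangle_ineq4[of x y] by (intro power_mono) auto
  also have "\<dots> \<le> (1 + (norm x)\<^sup>2) * (1 + (norm y)\<^sup>2)"
    using zero_le_power2[of "norm x * norm y - 1"] by (simp add: power2_eq_square algebra_simps)
  finally have "((norm (x - y))\<^sup>2) powr \<alpha> \<le> ((1 + (norm x)\<^sup>2) * (1 + (norm y)\<^sup>2)) powr \<alpha>"
    using a by (intro powr_mono2) auto
  moreover have "norm (x - y) powr (2*\<alpha>) = ((norm (x - y))\<^sup>2) powr \<alpha>"
    by (cases "x = y") (simp_all add: powr_powr[symmetric] powr_realpow)
  ultimately show ?thesis by (simp add: powr_mult)
qed

text \<open>Pointwise splitting of the weighted majorant: the growth |x-y|^{2\<alpha>} is absorbed by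
  the weights (costing \<alpha> in the exponent), the singularity |x-y|^{-\<alpha>} is kept local.\<close>
lemma weighted_logmaj_le:
  fixes x y :: "real^2"
  assumes s: "s \<ge> 0" and a: "\<alpha> \<ge> 0"
  shows "weight s x * weight s y * logmaj \<alpha> (x - y)
    \<le> 2 * weight s x * weight s y + weight (s-\<alpha>) x * weight (s-\<alpha>) y
       + weight s x * local_singularity \<alpha> (x - y)"
proof -
  have growth: "norm (x - y) powr (2*\<alpha>) \<le> (1 + (norm x)\<^sup>2) powr \<alpha> * (1 + (norm y)\<^sup>2) powr \<alpha>"
    using a by (rule norm_diff_powr_le)
  have growth_weighted:
    "weight s x * weight s y * norm (x - y) powr (2*\<alpha>) \<le> weight (s-\<alpha>) x * weight (s-\<alpha>) y"
  proof -
    have "weight s x * weight s y * norm (x - y) powr (2*\<alpha>)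
        \<le> weight s x * weight s y * ((1 + (norm x)\<^sup>2) powr \<alpha> * (1 + (norm y)\<^sup>2) powr \<alpha>)"
      using growth weight_pos[of s x] weight_pos[of s y] by (intro mult_left_mono) auto
    also have "\<dots> = weight (s-\<alpha>) x * weight (s-\<alpha>) y"
      unfolding weight_def using one_plus_sq_pos[of x] one_plus_sq_pos[of y]
      by (simp add: powr_add[symmetric] mult_ac)
    finally show ?thesis .
  qed
  have singular: "norm (x - y) powr (-\<alpha>) \<le> 1 + local_singularity \<alpha> (x - y)"
  proof (cases "norm (x - y) < 1")
    case True then show ?thesis by (simp add: local_singularity_def)
  next
    case False
    then show ?thesis
      using powr_neg_le1[of "norm (x - y)" \<alpha>] a by (simp add: local_singularity_def)
  qed
  have singular_weighted: "weight s x * weight s y * norm (x - y) powr (-\<alpha>)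
      \<le> weight s x * weight s y + weight s x * local_singularity \<alpha> (x - y)"
  proof -
    have "weight s x * weight s y * norm (x - y) powr (-\<alpha>)
        \<le> weight s x * weight s y * (1 + local_singularity \<alpha> (x - y))"
      using singular weight_pos[of s x] weight_pos[of s y] by (intro mult_left_mono) auto
    also have "\<dots> = weight s x * weight s y + weight s x * (weight s y * local_singularity \<alpha> (x - y))"
      by (simp add: algebra_simps)
    also have "\<dots> \<le> weight s x * weight s y + weight s x * local_singularity \<alpha> (x - y)"
      using weight_le_one[OF s, of y] weight_pos[of s x] weight_pos[of s y]
        local_singularity_nonneg[of \<alpha> "x - y"]
      by (intro add_left_mono mult_left_mono mult_left_le_one_le) auto
    finally show ?thesis .
  qed
  show ?thesis
    using growth_weighted singular_weighted unfolding logmaj_def by (simp add: algebra_simps)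
qed

lemma nn_integral_tensor:
  fixes a b :: "'a::euclidean_space \<Rightarrow> real"
  assumes [measurable]: "a \<in> borel_measurable borel" "b \<in> borel_measurable borel"
  shows "(\<integral>\<^sup>+x. \<integral>\<^sup>+y. ennreal (a x) * ennreal (b y) \<partial>lborel \<partial>lborel)
    = (\<integral>\<^sup>+x. ennreal (a x) \<partial>lborel) * (\<integral>\<^sup>+y. ennreal (b y) \<partial>lborel)"
  by (simp add: nn_integral_cmult nn_integral_multc)

lemma nn_integral_convolution_product:
  fixes a h :: "'a::euclidean_space \<Rightarrow> real"
  assumes [measurable]: "a \<in> borel_measurable borel" "h \<in> borel_measurable borel"
  shows "(\<integral>\<^sup>+x. \<integral>\<^sup>+y. ennreal (a x) * ennreal (h (x - y)) \<partial>lborel \<partial>lborel)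
    = (\<integral>\<^sup>+x. ennreal (a x) \<partial>lborel) * (\<integral>\<^sup>+z. ennreal (h z) \<partial>lborel)"
proof -
  have "(\<integral>\<^sup>+y. ennreal (h (x - y)) \<partial>lborel) = (\<integral>\<^sup>+z. ennreal (h z) \<partial>lborel)" for x
    by (rule nn_integral_reflect_translate) measurable
  then show ?thesis by (simp add: nn_integral_cmult nn_integral_multc)
qed

text \<open>The double integral of the weighted majorant is finite when 0 < \<alpha> \<le> 1 and 2\<alpha> \<le> s - 1;
  this is the Hilbert--Schmidt-type constant controlling every operator below.\<close>
lemma weighted_logmaj_finite:
  assumes s: "s > 1" and a: "0 < \<alpha>" "\<alpha> \<le> 1" "2*\<alpha> \<le> s - 1"
  shows "(\<integral>\<^sup>+x. \<integral>\<^sup>+y. ennreal (weight s x * weight s y * logmaj \<alpha> (x - y)) \<partial>lborel \<partial>lborel) < \<infinity>"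
proof -
  let ?I = "\<lambda>\<sigma>. \<integral>\<^sup>+x. ennreal (weight \<sigma> x) \<partial>lborel"
  let ?H = "\<integral>\<^sup>+z. ennreal (local_singularity \<alpha> z) \<partial>lborel"
  have "(\<integral>\<^sup>+x. \<integral>\<^sup>+y. ennreal (weight s x * weight s y * logmaj \<alpha> (x - y)) \<partial>lborel \<partial>lborel)
     \<le> (\<integral>\<^sup>+x. \<integral>\<^sup>+y. ennreal (2 * weight s x) * ennreal (weight s y)
          + ennreal (weight (s-\<alpha>) x) * ennreal (weight (s-\<alpha>) y)
          + ennreal (weight s x) * ennreal (local_singularity \<alpha> (x - y)) \<partial>lborel \<partial>lborel)"
  proof (intro nn_integral_mono)
    fix x y :: "real^2"
    show "ennreal (weight s x * weight s y * logmaj \<alpha> (x - y))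
      \<le> ennreal (2 * weight s x) * ennreal (weight s y)
          + ennreal (weight (s-\<alpha>) x) * ennreal (weight (s-\<alpha>) y)
          + ennreal (weight s x) * ennreal (local_singularity \<alpha> (x - y))"
      using weighted_logmaj_le[of s \<alpha> x y] s a weight_pos[of s x] weight_pos[of s y]
        weight_pos[of "s-\<alpha>" x] weight_pos[of "s-\<alpha>" y] local_singularity_nonneg[of \<alpha> "x - y"]
      by (simp add: ennreal_plus[symmetric] ennreal_mult[symmetric] mult.assoc ennreal_leI
          del: ennreal_plus)
  qed
  also have "\<dots> = (\<integral>\<^sup>+x. \<integral>\<^sup>+y. ennreal (2 * weight s x) * ennreal (weight s y) \<partial>lborel \<partial>lborel)
      + (\<integral>\<^sup>+x. \<integral>\<^sup>+y. ennreal (weight (s-\<alpha>) x) * ennreal (weight (s-\<alpha>) y) \<partial>lborel \<partial>lborel)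
      + (\<integral>\<^sup>+x. \<integral>\<^sup>+y. ennreal (weight s x) * ennreal (local_singularity \<alpha> (x - y)) \<partial>lborel \<partial>lborel)"
    by (simp add: nn_integral_add)
  also have "\<dots> = ?I s * (2 * ?I s) + ?I (s-\<alpha>) * ?I (s-\<alpha>) + ?I s * ?H"
  proof -
    have "(\<integral>\<^sup>+x. ennreal (2 * weight s x) \<partial>lborel) = 2 * ?I s"
      using weight_pos[of s] by (simp add: ennreal_mult less_imp_le nn_integral_cmult)
    then have "(\<integral>\<^sup>+x. \<integral>\<^sup>+y. ennreal (2 * weight s x) * ennreal (weight s y) \<partial>lborel \<partial>lborel)
        = ?I s * (2 * ?I s)"
      using nn_integral_tensor[of "\<lambda>x. 2 * weight s x" "weight s"] by (simp add: mult.commute)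
    moreover have "(\<integral>\<^sup>+x. \<integral>\<^sup>+y. ennreal (weight (s-\<alpha>) x) * ennreal (weight (s-\<alpha>) y) \<partial>lborel \<partial>lborel)
        = ?I (s-\<alpha>) * ?I (s-\<alpha>)"
      by (rule nn_integral_tensor) measurable
    moreover have "(\<integral>\<^sup>+x. \<integral>\<^sup>+y. ennreal (weight s x) * ennreal (local_singularity \<alpha> (x - y)) \<partial>lborel \<partial>lborel)
        = ?I s * ?H"
      by (rule nn_integral_convolution_product) measurable
    ultimately show ?thesis by simp
  qed
  also have "\<dots> < \<infinity>"
    using weight_nn_integral_finite[of s] weight_nn_integral_finite[of "s-\<alpha>"]
      local_singularity_nn_integral_finite[of \<alpha>] s a
    by (simp add: ennreal_mult_less_top)
  finally show ?thesis .
qed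

lemma cosh_borel: "(cosh :: real \<Rightarrow> real) \<in> borel_measurable borel"
  by (intro borel_measurable_continuous_onI continuous_intros)

lemma sinh_borel: "(sinh :: real \<Rightarrow> real) \<in> borel_measurable borel"
  by (intro borel_measurable_continuous_onI continuous_intros)

lemma cosh_measurable[measurable (raw)]: "f \<in> borel_measurable M \<Longrightarrow> (\<lambda>x. cosh (f x) :: real) \<in> borel_measurable M"
  using measurable_comp[OF _ cosh_borel] by (simp add: comp_def)

lemma sinh_measurable[measurable (raw)]: "f \<in> borel_measurable M \<Longrightarrow> (\<lambda>x. sinh (f x) :: real) \<in> borel_measurable M"
  using measurable_comp[OF _ sinh_borel] by (simp add: comp_def)

text \<open>cosh u \<ge> u/2, which makes the integrand of K0 decay exponentially.\<close>
lemma cosh_ge_half: "(u::real) \<ge> 0 \<Longrightarrow> u/2 \<le> cosh u"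
proof -
  assume "u \<ge> 0"
  have "1 + u \<le> exp u" by (rule exp_ge_add_one_self)
  moreover have "0 < exp (-u)" by simp
  ultimately have "u \<le> exp u + exp (-u)" using \<open>u \<ge> 0\<close> by linarith
  then show ?thesis by (simp add: cosh_def)
qed

text \<open>cosh u = sinh u + e^{-u}; the sinh part of K1 integrates exactly.\<close>
lemma cosh_eq_sinh_exp: "cosh (u::real) = sinh u + exp (-u)"
  by (simp add: cosh_def sinh_def field_simps)

text \<open>K0 as an extended nonnegative integral, so that Tonelli's theorem applies.\<close>
definition K0_nn :: "real \<Rightarrow> ennreal" where
  "K0_nn a = (\<integral>\<^sup>+u. ennreal (exp (-a * cosh u)) * indicator {0..} u \<partial>lborel)"

text \<open>K1(t) = \<integral>_0^\<infinity> cosh u e^{-t cosh u} du, the negative derivative of K0.\<close>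
definition K1_nn :: "real \<Rightarrow> ennreal" where
  "K1_nn a = (\<integral>\<^sup>+u. ennreal (cosh u * exp (-a * cosh u)) * indicator {0..} u \<partial>lborel)"

lemma K0_nn_finite:
  assumes "a > 0" shows "K0_nn a < \<infinity>"
proof -
  have "K0_nn a \<le> (\<integral>\<^sup>+u. ennreal (exp (-(a/2)*u)) * indicator {0..} u \<partial>lborel)"
    unfolding K0_nn_def
  proof (intro nn_integral_mono)
    fix u :: real
    show "ennreal (exp (-a * cosh u)) * indicator {0..} u \<le> ennreal (exp (-(a/2)*u)) * indicator {0..} u"
    proof (cases "u \<ge> 0")
      case True
      then have "a * (u/2) \<le> a * cosh u" using cosh_ge_half[OF True] assms by (intro mult_left_mono) auto
      then have "exp (-a * cosh u) \<le> exp (-(a/2)*u)" by simp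
      then show ?thesis using True by (auto intro: ennreal_leI)
    qed auto
  qed
  also have "\<dots> = ennreal (1/(a/2))" using assms by (intro nn_integral_exp_tail) auto
  finally show ?thesis using le_less_trans by fastforce
qed

lemma K0_eq_K0_nn:
  assumes "a > 0" shows "ennreal (K0 a) = K0_nn a" "K0 a = enn2real (K0_nn a)"
proof -
  have "K0 a = enn2real (\<integral>\<^sup>+t. ennreal (indicator {0..} t * exp (- a * cosh t)) \<partial>lborel)"
    unfolding K0_def by (rule integral_eq_nn_integral) auto
  also have "(\<integral>\<^sup>+t. ennreal (indicator {0..} t * exp (- a * cosh t)) \<partial>lborel) = K0_nn a"
    unfolding K0_nn_def by (intro nn_integral_cong) (auto simp: indicator_def)
  finally show "K0 a = enn2real (K0_nn a)" .
  then show "ennreal (K0 a) = K0_nn a" using K0_nn_finite[OF assms] by simp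
qed

lemma exp_neg_mult_split:
  assumes c: "c \<ge> 0" and ab: "a \<le> b"
  shows "ennreal (exp (-a * c))
    = ennreal (exp (-b * c)) + (\<integral>\<^sup>+t. ennreal (c * exp (-t * c)) * indicator {a..b} t \<partial>lborel)"
proof -
  have "(\<integral>\<^sup>+t. ennreal (c * exp (-t * c)) * indicator {a..b} t \<partial>lborel)
      = ennreal ((\<lambda>t. - exp (-t * c)) b - (\<lambda>t. - exp (-t * c)) a)"
  proof (rule nn_integral_FTC_interval)
    fix x assume "x \<in> {a..b}"
    show "((\<lambda>t. - exp (-t * c)) has_real_derivative c * exp (-x * c)) (at x)"
      by (auto intro!: derivative_eq_intros)
    show "0 \<le> c * exp (-x * c)" using c by simp
  qed (use ab in auto)
  moreover have "exp (-b * c) \<le> exp (-a * c)" using ab c by (simp add: mult_right_mono)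
  ultimately show ?thesis by (simp add: ennreal_plus[symmetric] del: ennreal_plus)
qed

text \<open>Integrated form of K0' = -K1: K0(a) = K0(b) + \<integral>_a^b K1 for 0 < a \<le> b, by Tonelli
  applied to e^{-a cosh u} = e^{-b cosh u} + \<integral>_a^b cosh u e^{-t cosh u} dt.\<close>
lemma K0_nn_split:
  assumes "0 < a" "a \<le> b"
  shows "K0_nn a = K0_nn b + (\<integral>\<^sup>+t. K1_nn t * indicator {a..b} t \<partial>lborel)"
proof -
  have "K0_nn a = (\<integral>\<^sup>+u. (ennreal (exp (-b * cosh u)) + (\<integral>\<^sup>+t. ennreal (cosh u * exp (-t * cosh u)) * indicator {a..b} t \<partial>lborel)) * indicator {0..} u \<partial>lborel)"
    unfolding K0_nn_def by (intro nn_integral_cong) (simp only: exp_neg_mult_split[OF cosh_real_nonneg assms(2)])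
  also have "\<dots> = (\<integral>\<^sup>+u. ennreal (exp (-b * cosh u)) * indicator {0..} u + (\<integral>\<^sup>+t. ennreal (cosh u * exp (-t * cosh u)) * indicator {a..b} t \<partial>lborel) * indicator {0..} u \<partial>lborel)"
    by (intro nn_integral_cong) (simp add: distrib_right)
  also have "\<dots> = K0_nn b + (\<integral>\<^sup>+u. (\<integral>\<^sup>+t. ennreal (cosh u * exp (-t * cosh u)) * indicator {a..b} t \<partial>lborel) * indicator {0..} u \<partial>lborel)"
    unfolding K0_nn_def by (intro nn_integral_add) auto
  also have "(\<integral>\<^sup>+u. (\<integral>\<^sup>+t. ennreal (cosh u * exp (-t * cosh u)) * indicator {a..b} t \<partial>lborel) * indicator {0..} u \<partial>lborel)
      = (\<integral>\<^sup>+u. (\<integral>\<^sup>+t. ennreal (cosh u * exp (-t * cosh u)) * indicator {a..b} t * indicator {0..} u \<partial>lborel) \<partial>lborel)"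
    by (intro nn_integral_cong) (simp add: nn_integral_multc)
  also have "\<dots> = (\<integral>\<^sup>+t. (\<integral>\<^sup>+u. ennreal (cosh u * exp (-t * cosh u)) * indicator {a..b} t * indicator {0..} u \<partial>lborel) \<partial>lborel)"
    by (rule lborel_pair.Fubini') measurable
  also have "\<dots> = (\<integral>\<^sup>+t. K1_nn t * indicator {a..b} t \<partial>lborel)"
    unfolding K1_nn_def
  proof (intro nn_integral_cong)
    fix t :: real
    have "(\<integral>\<^sup>+u. ennreal (cosh u * exp (-t * cosh u)) * indicator {a..b} t * indicator {0..} u \<partial>lborel)
      = (\<integral>\<^sup>+u. (ennreal (cosh u * exp (-t * cosh u)) * indicator {0..} u) * indicator {a..b} t \<partial>lborel)"
      by (intro nn_integral_cong) (simp add: mult_ac)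
    also have "\<dots> = (\<integral>\<^sup>+u. ennreal (cosh u * exp (-t * cosh u)) * indicator {0..} u \<partial>lborel) * indicator {a..b} t"
      by (rule nn_integral_multc) measurable
    finally show "(\<integral>\<^sup>+u. ennreal (cosh u * exp (-t * cosh u)) * indicator {a..b} t * indicator {0..} u \<partial>lborel)
      = (\<integral>\<^sup>+u. ennreal (cosh u * exp (-t * cosh u)) * indicator {0..} u \<partial>lborel) * indicator {a..b} t" .
  qed
  finally show ?thesis .
qed

lemma sinh_int:
  assumes "t > 0"
  shows "(\<integral>\<^sup>+u. ennreal (sinh u * exp (-t * cosh u)) * indicator {0..} u \<partial>lborel) = ennreal (exp (-t)/t)"
proof -
  define F where "F = (\<lambda>u::real. - exp (-t * cosh u) / t)"
  have "(\<integral>\<^sup>+u. ennreal (sinh u * exp (-t * cosh u)) * indicator {0..} u \<partial>lborel) = 0 - F 0"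
  proof (rule nn_integral_FTC_atLeast)
    show "(F \<longlongrightarrow> 0) at_top" unfolding F_def using assms by real_asymp
    fix x :: real assume x: "0 \<le> x"
    show "(F has_real_derivative sinh x * exp (-t * cosh x)) (at x)"
      unfolding F_def using assms by (auto intro!: derivative_eq_intros simp: field_simps)
    show "0 \<le> sinh x * exp (-t * cosh x)" using x by simp
  qed measurable
  then show ?thesis by (simp add: F_def)
qed

lemma K1_nn_lower:
  assumes "t > 0" shows "ennreal (exp (-t)/t) \<le> K1_nn t"
proof -
  have "ennreal (exp (-t)/t) = (\<integral>\<^sup>+u. ennreal (sinh u * exp (-t * cosh u)) * indicator {0..} u \<partial>lborel)"
    using sinh_int[OF assms] by simp
  also have "\<dots> \<le> K1_nn t" unfolding K1_nn_def
    by (intro nn_integral_mono mult_right_mono ennreal_leI) (auto intro: sinh_le_cosh_real)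
  finally show ?thesis .
qed

text \<open>Upper bound K1(t) \<le> e^{-t}/t + e^{-t}: the remainder e^{-u} of cosh u contributes at
  most e^{-t}.\<close>
lemma K1_nn_upper:
  assumes "t > 0" shows "K1_nn t \<le> ennreal (exp (-t)/t + exp (-t))"
proof -
  have "K1_nn t = (\<integral>\<^sup>+u. ennreal (sinh u * exp (-t * cosh u)) * indicator {0..} u
                   + ennreal (exp (-u) * exp (-t * cosh u)) * indicator {0..} u \<partial>lborel)"
    unfolding K1_nn_def
  proof (intro nn_integral_cong)
    fix u :: real
    show "ennreal (cosh u * exp (- t * cosh u)) * indicator {0..} u =
          ennreal (sinh u * exp (-t * cosh u)) * indicator {0..} u + ennreal (exp (-u) * exp (-t * cosh u)) * indicator {0..} u"
      by (cases "u \<ge> 0") (auto simp: cosh_eq_sinh_exp ennreal_plus[symmetric] distrib_right simp del: ennreal_plus)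
  qed
  also have "\<dots> = (\<integral>\<^sup>+u. ennreal (sinh u * exp (-t * cosh u)) * indicator {0..} u \<partial>lborel)
                   + (\<integral>\<^sup>+u. ennreal (exp (-u) * exp (-t * cosh u)) * indicator {0..} u \<partial>lborel)"
    by (intro nn_integral_add) auto
  also have "(\<integral>\<^sup>+u. ennreal (exp (-u) * exp (-t * cosh u)) * indicator {0..} u \<partial>lborel)
     \<le> (\<integral>\<^sup>+u. ennreal (exp (-t)) * (ennreal (exp (-1*u)) * indicator {0..} u) \<partial>lborel)"
  proof (intro nn_integral_mono)
    fix u :: real
    have "exp (-t * cosh u) \<le> exp (-t)" using assms cosh_real_ge_1[of u] by simp
    then have "exp (-u) * exp (-t * cosh u) \<le> exp (-t) * exp (-1*u)" by (simp add: mult.commute)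
    then have "ennreal (exp (-u) * exp (-t * cosh u)) \<le> ennreal (exp (-t)) * ennreal (exp (-1*u))"
      by (simp add: ennreal_mult[symmetric] ennreal_leI)
    then show "ennreal (exp (-u) * exp (-t * cosh u)) * indicator {0..} u \<le> ennreal (exp (-t)) * (ennreal (exp (-1*u)) * indicator {0..} u)"
      by (cases "u \<ge> 0") auto
  qed
  also have "\<dots> = ennreal (exp (-t)) * ennreal (1/1)"
    using nn_integral_exp_tail[of 1] by (subst nn_integral_cmult) auto
  finally have "K1_nn t \<le> ennreal (exp (-t)/t) + ennreal (exp (-t))"
    using sinh_int[OF assms] by (auto intro: add_left_mono order_trans)
  moreover have "ennreal (exp (-t)/t) + ennreal (exp (-t)) = ennreal (exp (-t)/t + exp (-t))"
    using assms by (intro ennreal_plus[symmetric]) auto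
  ultimately show ?thesis by simp
qed

text \<open>min(1, 1/t) \<le> t^{\<alpha>-1} for 0 < \<alpha> \<le> 1; with the next two facts, K1(t) differs from
  1/t by at most t^{\<alpha>-1}.\<close>
lemma min_le_tpow:
  fixes t \<alpha> :: real
  assumes "0 < t" "0 < \<alpha>" "\<alpha> \<le> 1"
  shows "min 1 (1/t) \<le> t powr (\<alpha> - 1)"
proof (cases "t \<le> 1")
  case True
  have "t powr (1 - \<alpha>) \<le> 1" using True assms by (intro powr_le1) auto
  then have "1 \<le> t powr (\<alpha> - 1)" using assms
  proof -
    have "t powr (\<alpha> - 1) = 1 / t powr (1 - \<alpha>)"
      using assms by (simp add: powr_minus_divide[symmetric])
    moreover have "t powr (1 - \<alpha>) > 0" using assms by simp
    ultimately show ?thesis using \<open>t powr (1 - \<alpha>) \<le> 1\<close> by (simp add: le_divide_eq_1_pos)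
  qed
  then show ?thesis by simp
next
  case False
  have "t powr (-1) \<le> t powr (\<alpha> - 1)" using False assms by (intro powr_mono) auto
  moreover have "t powr (-1) = 1/t" using assms by (simp add: powr_minus_divide)
  ultimately show ?thesis using min.cobounded2[of 1 "1/t"] by linarith
qed

lemma exp_neg_le_tpow:
  fixes t \<alpha> :: real
  assumes "0 < t" "0 < \<alpha>" "\<alpha> \<le> 1"
  shows "exp (-t) \<le> t powr (\<alpha> - 1)"
proof -
  have "exp (-t) \<le> 1" using assms by (simp add: exp_le_one_iff)
  moreover have "exp (-t) \<le> 1/t"
  proof -
    have "t \<le> exp t" using exp_ge_add_one_self[of t] by linarith
    then show ?thesis using assms by (simp add: exp_minus divide_simps)
  qed
  ultimately have "exp (-t) \<le> min 1 (1/t)" by (rule min.boundedI)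
  with min_le_tpow[OF assms] show ?thesis by linarith
qed

lemma inv_le_tpow:
  fixes t \<alpha> :: real
  assumes "0 < t" "0 < \<alpha>" "\<alpha> \<le> 1"
  shows "1/t \<le> exp (-t)/t + t powr (\<alpha> - 1)"
proof -
  have "(1 - exp (-t))/t \<le> 1/t" using assms by (intro divide_right_mono) auto
  moreover have "(1 - exp (-t))/t \<le> 1"
  proof -
    have "1 - t \<le> exp (-t)" using exp_ge_add_one_self[of "-t"] by simp
    then show ?thesis using assms by (simp add: divide_simps)
  qed
  ultimately have "(1 - exp (-t))/t \<le> min 1 (1/t)" by (intro min.boundedI)
  with min_le_tpow[OF assms] have "(1 - exp (-t))/t \<le> t powr (\<alpha> - 1)" by linarith
  then show ?thesis by (simp add: diff_divide_distrib)
qed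

lemma K1_nn_le_inverse_plus_powr:
  assumes t: "0 < t" and al: "0 < \<alpha>" "\<alpha> \<le> 1"
  shows "K1_nn t \<le> ennreal (1/t + t powr (\<alpha>-1))"
proof -
  have "exp (-t)/t + exp (-t) \<le> 1/t + t powr (\<alpha>-1)"
    using exp_neg_le_tpow[OF t al] t by (intro add_mono divide_right_mono) auto
  then show ?thesis using K1_nn_upper[OF t] by (meson ennreal_leI order_trans)
qed

lemma inverse_le_K1_nn_plus_powr:
  assumes t: "0 < t" and al: "0 < \<alpha>" "\<alpha> \<le> 1"
  shows "ennreal (1/t) \<le> K1_nn t + ennreal (t powr (\<alpha>-1))"
proof -
  have "ennreal (1/t) \<le> ennreal (exp (-t)/t + t powr (\<alpha>-1))"
    using inv_le_tpow[OF t al] by (rule ennreal_leI)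
  also have "\<dots> = ennreal (exp (-t)/t) + ennreal (t powr (\<alpha>-1))"
    using t by (intro ennreal_plus) auto
  also have "\<dots> \<le> K1_nn t + ennreal (t powr (\<alpha>-1))"
    using K1_nn_lower[OF t] by (rule add_right_mono)
  finally show ?thesis .
qed

lemma has_real_derivative_powr_div:
  assumes "0 < x" "0 < \<alpha>"
  shows "((\<lambda>t. t powr \<alpha> / \<alpha>) has_real_derivative x powr (\<alpha> - 1)) (at x)"
  using DERIV_cdivide[OF has_real_derivative_powr[OF assms(1), of \<alpha>], of \<alpha>] assms(2) by simp

text \<open>Upper half of the increment estimate: K0 decreases on [a,b] by at most the integral
  of K1 \<le> 1/t + t^{\<alpha>-1}.\<close>
lemma K0_decrease_upper:
  assumes ab: "0 < a" "a \<le> b" and al: "0 < \<alpha>" "\<alpha> \<le> 1"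
  shows "K0 a \<le> K0 b + ((ln b + b powr \<alpha> / \<alpha>) - (ln a + a powr \<alpha> / \<alpha>))"
proof -
  have primitive: "(\<integral>\<^sup>+t. ennreal (1/t + t powr (\<alpha>-1)) * indicator {a..b} t \<partial>lborel)
      = ennreal ((ln b + b powr \<alpha> / \<alpha>) - (ln a + a powr \<alpha> / \<alpha>))"
  proof (rule nn_integral_FTC_interval[where F="\<lambda>t. ln t + t powr \<alpha> / \<alpha>"])
    fix x assume "x \<in> {a..b}"
    then have "0 < x" using ab by simp
    then show "((\<lambda>t. ln t + t powr \<alpha> / \<alpha>) has_real_derivative 1/x + x powr (\<alpha>-1)) (at x)"
      using al by (intro DERIV_add has_real_derivative_powr_div) (auto intro!: derivative_eq_intros)
    show "0 \<le> 1/x + x powr (\<alpha>-1)" using \<open>0 < x\<close> by simp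
  qed (use ab in auto)
  have K1_integral: "(\<integral>\<^sup>+t. K1_nn t * indicator {a..b} t \<partial>lborel)
      \<le> (\<integral>\<^sup>+t. ennreal (1/t + t powr (\<alpha>-1)) * indicator {a..b} t \<partial>lborel)"
    using ab K1_nn_le_inverse_plus_powr[OF _ al]
    by (intro nn_integral_mono) (auto simp: indicator_def)
  have increment_nonneg: "0 \<le> (ln b + b powr \<alpha> / \<alpha>) - (ln a + a powr \<alpha> / \<alpha>)"
    using ab al powr_mono2[of \<alpha> a b] by (simp add: divide_right_mono add_mono)
  have "ennreal (K0 a) \<le> ennreal (K0 b) + ennreal ((ln b + b powr \<alpha> / \<alpha>) - (ln a + a powr \<alpha> / \<alpha>))"
    using K0_nn_split[OF ab] K1_integral primitive K0_eq_K0_nn[of a] K0_eq_K0_nn[of b] ab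
    by (simp add: add_left_mono)
  then show ?thesis
    using increment_nonneg K0_eq_K0_nn[of a] K0_eq_K0_nn[of b] ab
    by (simp add: ennreal_plus[symmetric] ennreal_le_iff del: ennreal_plus)
qed

text \<open>Lower half: K0 decreases on [a,b] by at least the integral of K1 \<ge> 1/t - t^{\<alpha>-1}.\<close>
lemma K0_decrease_lower:
  assumes ab: "0 < a" "a \<le> b" and al: "0 < \<alpha>" "\<alpha> \<le> 1"
  shows "K0 b + (ln b - ln a) \<le> K0 a + (b powr \<alpha> / \<alpha> - a powr \<alpha> / \<alpha>)"
proof -
  have primitive_powr: "(\<integral>\<^sup>+t. ennreal (t powr (\<alpha>-1)) * indicator {a..b} t \<partial>lborel)
      = ennreal (b powr \<alpha> / \<alpha> - a powr \<alpha> / \<alpha>)"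
  proof (rule nn_integral_FTC_interval[where F="\<lambda>t. t powr \<alpha> / \<alpha>"])
    fix x assume "x \<in> {a..b}"
    then show "((\<lambda>t. t powr \<alpha> / \<alpha>) has_real_derivative x powr (\<alpha>-1)) (at x)"
      using ab al by (intro has_real_derivative_powr_div) auto
  qed (use ab in auto)
  have primitive_ln: "(\<integral>\<^sup>+t. ennreal (1/t) * indicator {a..b} t \<partial>lborel) = ennreal (ln b - ln a)"
  proof (rule nn_integral_FTC_interval[where F="\<lambda>t. ln t"])
    fix x assume "x \<in> {a..b}"
    then have "0 < x" using ab by simp
    then show "(ln has_real_derivative 1/x) (at x)" by (auto intro!: derivative_eq_intros)
    show "0 \<le> 1/x" using \<open>0 < x\<close> by simp
  qed (use ab in auto)
  have K1_integral: "(\<integral>\<^sup>+t. ennreal (1/t) * indicator {a..b} t \<partial>lborel)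
      \<le> (\<integral>\<^sup>+t. K1_nn t * indicator {a..b} t \<partial>lborel)
         + (\<integral>\<^sup>+t. ennreal (t powr (\<alpha>-1)) * indicator {a..b} t \<partial>lborel)"
  proof -
    have "(\<integral>\<^sup>+t. ennreal (1/t) * indicator {a..b} t \<partial>lborel)
        \<le> (\<integral>\<^sup>+t. K1_nn t * indicator {a..b} t + ennreal (t powr (\<alpha>-1)) * indicator {a..b} t \<partial>lborel)"
      using ab inverse_le_K1_nn_plus_powr[OF _ al]
      by (intro nn_integral_mono) (auto simp: indicator_def)
    also have "\<dots> = (\<integral>\<^sup>+t. K1_nn t * indicator {a..b} t \<partial>lborel)
        + (\<integral>\<^sup>+t. ennreal (t powr (\<alpha>-1)) * indicator {a..b} t \<partial>lborel)"
      by (rule nn_integral_add) (auto simp: K1_nn_def)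
    finally show ?thesis .
  qed
  have "ennreal (K0 b) + ennreal (ln b - ln a) \<le> ennreal (K0 a) + ennreal (b powr \<alpha> / \<alpha> - a powr \<alpha> / \<alpha>)"
    using add_left_mono[OF K1_integral, of "K0_nn b"] K0_nn_split[OF ab] primitive_powr primitive_ln
      K0_eq_K0_nn[of a] K0_eq_K0_nn[of b] ab
    by (simp add: add.assoc)
  then show ?thesis
    using K0_eq_K0_nn[of a] K0_eq_K0_nn[of b] ab al powr_mono2[of \<alpha> a b]
    by (simp add: ennreal_plus[symmetric] ennreal_le_iff divide_right_mono del: ennreal_plus)
qed

lemma K0_log_increment:
  assumes ab: "0 < a" "a \<le> b" and al: "0 < \<alpha>" "\<alpha> \<le> 1"
  shows "\<bar>(K0 b + ln b) - (K0 a + ln a)\<bar> \<le> (b powr \<alpha> - a powr \<alpha>)/\<alpha>"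
  using K0_decrease_upper[OF assms] K0_decrease_lower[OF assms]
  by (simp add: abs_le_iff diff_divide_distrib)

lemma K0_log_holder:
  fixes a b \<alpha> :: real
  assumes "0 < a" "0 < b" "0 < \<alpha>" "\<alpha> \<le> 1"
  shows "\<bar>(K0 a + ln a) - (K0 b + ln b)\<bar> \<le> (a powr \<alpha> + b powr \<alpha>)/\<alpha>"
proof (cases "a \<le> b")
  case True
  have "\<bar>(K0 b + ln b) - (K0 a + ln a)\<bar> \<le> (b powr \<alpha> - a powr \<alpha>)/\<alpha>"
    using K0_log_increment[OF assms(1) True assms(3,4)] .
  moreover have "(b powr \<alpha> - a powr \<alpha>)/\<alpha> \<le> (a powr \<alpha> + b powr \<alpha>)/\<alpha>"
    using assms by (intro divide_right_mono) auto
  ultimately show ?thesis by (simp add: abs_minus_commute)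
next
  case False
  have "\<bar>(K0 a + ln a) - (K0 b + ln b)\<bar> \<le> (a powr \<alpha> - b powr \<alpha>)/\<alpha>"
    using K0_log_increment[OF assms(2) _ assms(3,4), of a] False by simp
  moreover have "(a powr \<alpha> - b powr \<alpha>)/\<alpha> \<le> (a powr \<alpha> + b powr \<alpha>)/\<alpha>"
    using assms by (intro divide_right_mono) auto
  ultimately show ?thesis by simp
qed

lemma K0_borel[measurable]: "K0 \<in> borel_measurable borel"
  unfolding K0_def by measurable

lemma gker_borel[measurable]: "(\<lambda>x. gker lam x) \<in> borel_measurable borel"
  unfolding gker_def by measurable

lemma kker_borel[measurable]: "kker \<in> borel_measurable borel"
  unfolding kker_def by measurable

lemma klam_borel[measurable]: "(\<lambda>x. klam lam u x) \<in> borel_measurable borel"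
  unfolding klam_def by measurable

lemma powr_square: "((r::real) powr g)\<^sup>2 = r powr (2*g)"
  by (simp add: power2_eq_square powr_add[symmetric])

lemma ln_square_le:
  fixes r \<alpha> :: real
  assumes r: "r > 0" and a: "\<alpha> > 0"
  shows "(ln r)\<^sup>2 \<le> 8/\<alpha>\<^sup>2 * (r powr \<alpha> + r powr (-\<alpha>))"
proof -
  define g where "g = \<alpha>/2"
  have g: "g > 0" using a by (simp add: g_def)
  have upper: "g * ln r \<le> r powr g"
    using ln_le_minus_one[of "r powr g"] r by (simp add: ln_powr)
  have lower: "- (g * ln r) \<le> r powr (-g)"
    using ln_le_minus_one[of "r powr (-g)"] r by (simp add: ln_powr)
  have "\<bar>g * ln r\<bar> \<le> \<bar>r powr g + r powr (-g)\<bar>"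
    using upper lower by (simp add: abs_le_iff add_increasing add_increasing2)
  then have "(g * ln r)\<^sup>2 \<le> (r powr g + r powr (-g))\<^sup>2"
    by (simp only: abs_le_square_iff)
  also have "\<dots> \<le> 2 * ((r powr g)\<^sup>2 + (r powr (-g))\<^sup>2)"
  proof -
    have "0 \<le> (r powr g - r powr (-g))\<^sup>2" by simp
    then show ?thesis by (simp add: power2_eq_square algebra_simps)
  qed
  also have "\<dots> = 2 * (r powr \<alpha> + r powr (-\<alpha>))"
    using r by (simp add: powr_square g_def)
  finally have "g\<^sup>2 * (ln r)\<^sup>2 \<le> 2 * (r powr \<alpha> + r powr (-\<alpha>))" by (simp add: power_mult_distrib)
  then have "(ln r)\<^sup>2 \<le> 2 * (r powr \<alpha> + r powr (-\<alpha>)) / g\<^sup>2"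
    using g by (simp add: pos_le_divide_eq mult.commute)
  also have "\<dots> = 8/\<alpha>\<^sup>2 * (r powr \<alpha> + r powr (-\<alpha>))"
  proof -
    have e: "g\<^sup>2 = \<alpha>\<^sup>2/4" by (simp add: g_def power_divide)
    have "\<And>X. 2 * X / (\<alpha>\<^sup>2/4) = 8/\<alpha>\<^sup>2 * X" using a by (simp add: field_simps)
    then show ?thesis by (simp only: e)
  qed
  finally show ?thesis .
qed

lemma powr_le_one_plus_powr_double:
  fixes r \<alpha> :: real
  assumes "r \<ge> 0" "\<alpha> > 0"
  shows "r powr \<alpha> \<le> 1 + r powr (2*\<alpha>)"
proof (cases "r \<le> 1")
  case True
  then have "r powr \<alpha> \<le> 1" using assms by (intro powr_le1) auto
  then show ?thesis by (smt (verit) powr_ge_zero)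
next
  case False
  then have "r powr \<alpha> \<le> r powr (2*\<alpha>)" using assms by (intro powr_mono) auto
  then show ?thesis by simp
qed

lemma kker_square_le:
  fixes z :: "real^2" and \<alpha> :: real
  assumes z: "z \<noteq> 0" and a: "\<alpha> > 0"
  shows "(kker z)\<^sup>2 \<le> 2/(pi\<^sup>2 * \<alpha>\<^sup>2) * logmaj \<alpha> z"
proof -
  define r where "r = norm z"
  have r: "r > 0" using z by (simp add: r_def)
  have "(kker z)\<^sup>2 = (ln r)\<^sup>2 / (4 * pi\<^sup>2)"
    using r by (simp add: kker_def r_def ln_div power2_eq_square field_simps)
  also have "\<dots> \<le> (8/\<alpha>\<^sup>2 * (r powr \<alpha> + r powr (-\<alpha>))) / (4 * pi\<^sup>2)"
    using ln_square_le[OF r a] by (intro divide_right_mono) auto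
  also have "\<dots> = 2/(pi\<^sup>2 * \<alpha>\<^sup>2) * (r powr \<alpha> + r powr (-\<alpha>))"
  proof -
    have "\<And>X::real. (8/\<alpha>\<^sup>2 * X) / (4 * pi\<^sup>2) = 2/(pi\<^sup>2 * \<alpha>\<^sup>2) * X" by (simp add: field_simps)
    then show ?thesis by blast
  qed
  also have "\<dots> \<le> 2/(pi\<^sup>2 * \<alpha>\<^sup>2) * logmaj \<alpha> z"
    using powr_le_one_plus_powr_double[of r \<alpha>] r a unfolding logmaj_def r_def by (intro mult_left_mono) auto
  finally show ?thesis .
qed

text \<open>Writing \<psi> = K0 + ln, the constant ln-terms cancel: for |u| = 1,
  k^\<lambda>(z) - k(z) = (\<psi>(\<surd>\<lambda>|z|) - \<psi>(\<surd>\<lambda>))/(2\<pi>).\<close>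
lemma klam_minus_kker:
  fixes z u :: "real^2"
  assumes z: "z \<noteq> 0" and u: "norm u = 1" and lam: "lam > 0"
  shows "klam lam u z - kker z
    = ((K0 (sqrt lam * norm z) + ln (sqrt lam * norm z)) - (K0 (sqrt lam) + ln (sqrt lam))) / (2*pi)"
proof -
  have "ln (sqrt lam * norm z) - ln (sqrt lam) = ln (norm z)" "ln (1 / norm z) = - ln (norm z)"
    using z lam by (simp_all add: ln_mult ln_div)
  then show ?thesis
    unfolding klam_def gker_def kker_def using u by (simp add: field_simps)
qed

lemma K0_log_dilation_square_le:
  assumes lam: "lam > 0" and r: "r > 0" and a: "0 < \<alpha>" "\<alpha> \<le> 1"
  shows "((K0 (sqrt lam * r) + ln (sqrt lam * r)) - (K0 (sqrt lam) + ln (sqrt lam)))\<^sup>2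
    \<le> 2 * lam powr \<alpha> * (1 + r powr (2*\<alpha>)) / \<alpha>\<^sup>2"
proof -
  define q where "q = sqrt lam"
  have q: "q > 0" using lam by (simp add: q_def)
  define D where "D = (K0 (q*r) + ln (q*r)) - (K0 q + ln q)"
  have "\<bar>D\<bar> \<le> ((q*r) powr \<alpha> + q powr \<alpha>)/\<alpha>"
    unfolding D_def using q r a by (intro K0_log_holder) auto
  also have "\<dots> = q powr \<alpha> * (r powr \<alpha> + 1) / \<alpha>"
    using q r by (simp add: powr_mult algebra_simps)
  finally have "D\<^sup>2 \<le> (q powr \<alpha> * (r powr \<alpha> + 1) / \<alpha>)\<^sup>2"
    by (metis abs_ge_zero abs_le_square_iff abs_of_nonneg order_trans)
  also have "\<dots> = (q powr \<alpha>)\<^sup>2 * (r powr \<alpha> + 1)\<^sup>2 / \<alpha>\<^sup>2"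
    by (simp add: power_mult_distrib power_divide)
  also have "(q powr \<alpha>)\<^sup>2 = lam powr \<alpha>"
  proof -
    have "(q powr \<alpha>)\<^sup>2 = q powr (2*\<alpha>)" using q by (simp add: powr_square)
    also have "\<dots> = (q powr 2) powr \<alpha>" by (simp add: powr_powr)
    also have "q powr 2 = lam" using q lam by (simp add: q_def powr_realpow)
    finally show ?thesis .
  qed
  also have "(r powr \<alpha> + 1)\<^sup>2 \<le> 2 * (1 + r powr (2*\<alpha>))"
  proof -
    have "(r powr \<alpha> + 1)\<^sup>2 \<le> 2 * ((r powr \<alpha>)\<^sup>2 + 1)"
      using zero_le_power2[of "r powr \<alpha> - 1"] by (simp add: power2_eq_square algebra_simps)
    then show ?thesis using r by (simp add: powr_square)
  qed
  finally have "D\<^sup>2 \<le> lam powr \<alpha> * (2 * (1 + r powr (2*\<alpha>))) / \<alpha>\<^sup>2"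
    by (simp add: divide_right_mono mult_left_mono)
  then show ?thesis unfolding D_def q_def by (simp add: algebra_simps)
qed

lemma klam_kker_diff_square_le:
  fixes z u :: "real^2" and lam \<alpha> :: real
  assumes z: "z \<noteq> 0" and u: "norm u = 1" and lam: "lam > 0" and a: "0 < \<alpha>" "\<alpha> \<le> 1"
  shows "(klam lam u z - kker z)\<^sup>2 \<le> lam powr \<alpha> / (pi\<^sup>2 * \<alpha>\<^sup>2) * logmaj \<alpha> z"
proof -
  have "(klam lam u z - kker z)\<^sup>2
      = ((K0 (sqrt lam * norm z) + ln (sqrt lam * norm z)) - (K0 (sqrt lam) + ln (sqrt lam)))\<^sup>2 / (4 * pi\<^sup>2)"
    using klam_minus_kker[OF z u lam] by (simp add: power_divide power_mult_distrib)
  also have "\<dots> \<le> 2 * lam powr \<alpha> * (1 + norm z powr (2*\<alpha>)) / \<alpha>\<^sup>2 / (4 * pi\<^sup>2)"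
    using K0_log_dilation_square_le[OF lam _ a, of "norm z"] z by (intro divide_right_mono) auto
  also have "\<dots> \<le> lam powr \<alpha> / (pi\<^sup>2 * \<alpha>\<^sup>2) * logmaj \<alpha> z"
  proof -
    have "1 + norm z powr (2*\<alpha>) \<le> logmaj \<alpha> z" by (simp add: logmaj_def)
    then have "lam powr \<alpha> * (1 + norm z powr (2*\<alpha>)) \<le> lam powr \<alpha> * logmaj \<alpha> z"
      by (rule mult_left_mono) simp
    also have "\<dots> \<le> 2 * (lam powr \<alpha> * logmaj \<alpha> z)"
      using logmaj_nonneg[of \<alpha> z] by simp
    finally have "lam powr \<alpha> * (1 + norm z powr (2*\<alpha>)) / (2 * (pi\<^sup>2 * \<alpha>\<^sup>2))
        \<le> 2 * (lam powr \<alpha> * logmaj \<alpha> z) / (2 * (pi\<^sup>2 * \<alpha>\<^sup>2))"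
      by (rule divide_right_mono) simp
    moreover have "2 * lam powr \<alpha> * (1 + norm z powr (2*\<alpha>)) / \<alpha>\<^sup>2 / (4 * pi\<^sup>2)
        = lam powr \<alpha> * (1 + norm z powr (2*\<alpha>)) / (2 * (pi\<^sup>2 * \<alpha>\<^sup>2))"
      using a by (simp add: field_simps)
    ultimately show ?thesis by simp
  qed
  finally show ?thesis .
qed

lemma klam_square_le:
  fixes z u :: "real^2" and lam \<alpha> :: real
  assumes z: "z \<noteq> 0" and u: "norm u = 1" and lam: "lam > 0" and a: "0 < \<alpha>" "\<alpha> \<le> 1"
  shows "(klam lam u z)\<^sup>2 \<le> (4/(pi\<^sup>2 * \<alpha>\<^sup>2) + 2 * (lam powr \<alpha> / (pi\<^sup>2 * \<alpha>\<^sup>2))) * logmaj \<alpha> z"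
proof -
  have "(klam lam u z)\<^sup>2 = (kker z + (klam lam u z - kker z))\<^sup>2" by simp
  also have "\<dots> \<le> 2 * (kker z)\<^sup>2 + 2 * (klam lam u z - kker z)\<^sup>2"
  proof -
    have "0 \<le> (kker z - (klam lam u z - kker z))\<^sup>2" by simp
    then show ?thesis by (simp add: power2_eq_square algebra_simps)
  qed
  also have "\<dots> \<le> 2 * (2/(pi\<^sup>2 * \<alpha>\<^sup>2) * logmaj \<alpha> z) + 2 * (lam powr \<alpha> / (pi\<^sup>2 * \<alpha>\<^sup>2) * logmaj \<alpha> z)"
    using kker_square_le[OF z a(1)] klam_kker_diff_square_le[OF z u lam a] by linarith
  also have "\<dots> = (4/(pi\<^sup>2 * \<alpha>\<^sup>2) + 2 * (lam powr \<alpha> / (pi\<^sup>2 * \<alpha>\<^sup>2))) * logmaj \<alpha> z"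
    by (simp add: algebra_simps)
  finally show ?thesis .
qed

lemma borel_imp_lebesgue_measurable: "h \<in> borel_measurable borel \<Longrightarrow> h \<in> borel_measurable lebesgue"
  by (rule measurable_completion) simp

lemma sobolev_weight_lebesgue_measurable[measurable]:
  "(\<lambda>x::real^2. (1 + (norm x)\<^sup>2) powr s) \<in> borel_measurable lebesgue"
  by (rule borel_imp_lebesgue_measurable) measurable

lemma lebesgue_measurable_borel_version:
  fixes f :: "'a::euclidean_space \<Rightarrow> complex"
  assumes "f \<in> borel_measurable lebesgue"
  obtains g where "g \<in> borel_measurable borel" "AE y in lborel. f y = g y"
proof -
  have "(\<lambda>y. Re (f y)) \<in> borel_measurable (completion lborel)" using assms by measurable
  from completion_ex_borel_measurable_real[OF this]
  obtain gr where gr: "gr \<in> borel_measurable lborel" "AE y in lborel. Re (f y) = gr y" by blast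
  have "(\<lambda>y. Im (f y)) \<in> borel_measurable (completion lborel)" using assms by measurable
  from completion_ex_borel_measurable_real[OF this]
  obtain gi where gi: "gi \<in> borel_measurable lborel" "AE y in lborel. Im (f y) = gi y" by blast
  define g where "g = (\<lambda>y. complex_of_real (gr y) + \<i> * complex_of_real (gi y))"
  have "g \<in> borel_measurable borel" using gr gi unfolding g_def by simp
  moreover have "AE y in lborel. f y = g y"
    using gr(2) gi(2)
  proof eventually_elim
    case (elim y)
    then show ?case by (simp add: g_def complex_eq_iff)
  qed
  ultimately show ?thesis using that by blast
qed

lemma Hs_borel_representative:
  fixes f :: "real^2 \<Rightarrow> complex"
  assumes "f \<in> Hs s"
  obtains g where "g \<in> borel_measurable borel" "AE y in lebesgue. f y = g y"
    "(\<integral>\<^sup>+y. ennreal ((1 + (norm y)\<^sup>2) powr s * (cmod (g y))\<^sup>2) \<partial>lborel) = ennreal ((Hnorm s f)\<^sup>2)"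
proof -
  have f_meas[measurable]: "f \<in> borel_measurable lebesgue"
    and f_int: "integrable lebesgue (\<lambda>x. (1 + (norm x)\<^sup>2) powr s * (cmod (f x))\<^sup>2)"
    using assms by (auto simp: Hs_def)
  obtain g where g_meas[measurable]: "g \<in> borel_measurable borel" and "AE y in lborel. f y = g y"
    using lebesgue_measurable_borel_version[OF f_meas] by blast
  then have fg: "AE y in lebesgue. f y = g y" by (intro AE_completion)
  have [measurable]: "g \<in> borel_measurable lebesgue"
    using g_meas by (simp add: measurable_completion)
  let ?w = "\<lambda>y. (1 + (norm y)\<^sup>2) powr s * (cmod (g y))\<^sup>2"
  have "integrable lebesgue ?w"
  proof (rule integrable_cong_AE_imp[OF f_int])
    show "?w \<in> borel_measurable lebesgue" by (rule borel_imp_lebesgue_measurable) measurable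
    show "AE x in lebesgue. (1 + (norm x)\<^sup>2) powr s * (cmod (f x))\<^sup>2 = ?w x"
      using fg by eventually_elim simp
  qed
  then have g_int: "integrable lborel ?w" by (subst (asm) integrable_completion) auto
  have "(LINT x|lebesgue. (1 + (norm x)\<^sup>2) powr s * (cmod (f x))\<^sup>2) = (LINT x|lebesgue. ?w x)"
    using fg by (intro integral_cong_AE) (auto elim!: eventually_mono)
  also have "\<dots> = (LINT x|lborel. ?w x)" by (rule integral_completion) measurable
  finally have "(Hnorm s f)\<^sup>2 = (LINT x|lborel. ?w x)"
    by (simp add: Hnorm_def integral_nonneg_AE)
  then have "(\<integral>\<^sup>+y. ennreal (?w y) \<partial>lborel) = ennreal ((Hnorm s f)\<^sup>2)"
    by (simp add: nn_integral_eq_integral[OF g_int])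
  with g_meas fg show ?thesis by (rule that)
qed

lemma conv_borel_representative:
  fixes K :: "real^2 \<Rightarrow> real" and f g :: "real^2 \<Rightarrow> complex"
  assumes [measurable]: "K \<in> borel_measurable borel" "g \<in> borel_measurable borel"
    and [measurable]: "f \<in> borel_measurable lebesgue" and fg: "AE y in lebesgue. f y = g y"
  shows "conv K f = (\<lambda>x. LINT y|lborel. complex_of_real (K (x - y)) * g y)"
proof
  fix x
  have [measurable]: "(\<lambda>y. K (x - y)) \<in> borel_measurable lebesgue" "g \<in> borel_measurable lebesgue"
    by (rule borel_imp_lebesgue_measurable, measurable)+
  have "conv K f x = (LINT y|lebesgue. complex_of_real (K (x - y)) * g y)"
    unfolding conv_def using fg by (intro integral_cong_AE) (auto elim!: eventually_mono)
  also have "\<dots> = (LINT y|lborel. complex_of_real (K (x - y)) * g y)"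
    by (rule integral_completion) measurable
  finally show "conv K f x = \<dots>" .
qed

lemma integrable_conv_borel_representative:
  fixes K :: "real^2 \<Rightarrow> real" and f g :: "real^2 \<Rightarrow> complex"
  assumes [measurable]: "K \<in> borel_measurable borel" "g \<in> borel_measurable borel"
    and f_meas[measurable]: "f \<in> borel_measurable lebesgue"
    and fg: "AE y in lebesgue. f y = g y"
    and "integrable lborel (\<lambda>y. complex_of_real (K (x - y)) * g y)"
  shows "integrable lebesgue (\<lambda>y. complex_of_real (K (x - y)) * f y)"
proof -
  have [measurable]: "(\<lambda>y. K (x - y)) \<in> borel_measurable lebesgue" "g \<in> borel_measurable lebesgue"
    by (rule borel_imp_lebesgue_measurable, measurable)+
  have "integrable lebesgue (\<lambda>y. complex_of_real (K (x - y)) * g y)"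
    using assms(5) by (subst integrable_completion) auto
  then show ?thesis
  proof (rule integrable_cong_AE_imp)
    show "(\<lambda>y. complex_of_real (K (x - y)) * f y) \<in> borel_measurable lebesgue" by measurable
    show "AE y in lebesgue. complex_of_real (K (x - y)) * g y = complex_of_real (K (x - y)) * f y"
      using fg by eventually_elim simp
  qed
qed

text \<open>Cauchy--Schwarz with the weight split between the kernel and the function:
  (\<integral>|K(x-y) g(y)| dy)^2 \<le> (\<integral> w_s(y) K(x-y)^2 dy) (\<integral> (1+|y|^2)^s |g(y)|^2 dy).\<close>
lemma conv_cauchy_schwarz:
  fixes K :: "real^2 \<Rightarrow> real" and g :: "real^2 \<Rightarrow> complex"
  assumes [measurable]: "K \<in> borel_measurable borel" "g \<in> borel_measurable borel"
  shows "(\<integral>\<^sup>+y. ennreal (norm (complex_of_real (K (x - y)) * g y)) \<partial>lborel)\<^sup>2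
    \<le> (\<integral>\<^sup>+y. ennreal (weight s y * (K (x - y))\<^sup>2) \<partial>lborel)
       * (\<integral>\<^sup>+y. ennreal ((1 + (norm y)\<^sup>2) powr s * (cmod (g y))\<^sup>2) \<partial>lborel)"
proof -
  define F where "F = (\<lambda>y. ennreal (\<bar>K (x - y)\<bar> * sqrt (weight s y)))"
  define H where "H = (\<lambda>y. ennreal (cmod (g y) / sqrt (weight s y)))"
  have [measurable]: "F \<in> borel_measurable lborel" "H \<in> borel_measurable lborel"
    unfolding F_def H_def by measurable
  have "(\<integral>\<^sup>+y. ennreal (norm (complex_of_real (K (x - y)) * g y)) \<partial>lborel) = (\<integral>\<^sup>+y. F y * H y \<partial>lborel)"
  proof (intro nn_integral_cong)
    fix y
    have "sqrt (weight s y) > 0" using weight_pos by simp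
    then show "ennreal (norm (complex_of_real (K (x - y)) * g y)) = F y * H y"
      unfolding F_def H_def by (simp add: ennreal_mult[symmetric] norm_mult)
  qed
  also have "(\<integral>\<^sup>+y. F y * H y \<partial>lborel)\<^sup>2 \<le> (\<integral>\<^sup>+y. F y ^ 2 \<partial>lborel) * (\<integral>\<^sup>+y. H y ^ 2 \<partial>lborel)"
    by (rule Cauchy_Schwarz_nn_integral) measurable
  also have "(\<integral>\<^sup>+y. F y ^ 2 \<partial>lborel) = (\<integral>\<^sup>+y. ennreal (weight s y * (K (x - y))\<^sup>2) \<partial>lborel)"
    using weight_pos[of s]
    by (intro nn_integral_cong) (simp add: F_def ennreal_power power_mult_distrib mult.commute less_imp_le)
  also have "(\<integral>\<^sup>+y. H y ^ 2 \<partial>lborel) = (\<integral>\<^sup>+y. ennreal ((1 + (norm y)\<^sup>2) powr s * (cmod (g y))\<^sup>2) \<partial>lborel)"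
  proof (intro nn_integral_cong)
    fix y
    have "weight s y > 0" by (rule weight_pos)
    moreover have "1 / weight s y = (1 + (norm y)\<^sup>2) powr s"
      unfolding weight_def by (simp add: powr_minus divide_inverse)
    ultimately show "H y ^ 2 = ennreal ((1 + (norm y)\<^sup>2) powr s * (cmod (g y))\<^sup>2)"
      by (simp add: H_def ennreal_power power_divide divide_simps)
  qed
  finally show ?thesis .
qed

text \<open>The norm of a Bochner integral is bounded by the integral of the norm, whether or not the
  function is integrable (the integral is 0 otherwise).\<close>
lemma norm_integral_le_nn_integral_norm:
  fixes f :: "'a \<Rightarrow> 'b::{banach, second_countable_topology}"
  shows "ennreal (norm (integral\<^sup>L M f)) \<le> (\<integral>\<^sup>+x. ennreal (norm (f x)) \<partial>M)"
  by (cases "integrable M f") (simp_all add: integral_norm_bound_ennreal not_integrable_integral_eq)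

lemma kernel_hilbert_schmidt_bound:
  fixes K :: "real^2 \<Rightarrow> real"
  assumes [measurable]: "K \<in> borel_measurable borel" and c: "c \<ge> 0"
    and K_bound: "\<forall>z. z \<noteq> 0 \<longrightarrow> (K z)\<^sup>2 \<le> c * logmaj \<alpha> z"
    and M: "(\<integral>\<^sup>+x. \<integral>\<^sup>+y. ennreal (weight s x * weight s y * logmaj \<alpha> (x - y)) \<partial>lborel \<partial>lborel) \<le> ennreal M"
  shows "(\<integral>\<^sup>+x. ennreal (weight s x) * (\<integral>\<^sup>+y. ennreal (weight s y * (K (x - y))\<^sup>2) \<partial>lborel) \<partial>lborel)
    \<le> ennreal c * ennreal M"
proof -
  have pointwise: "ennreal (weight s x) * (\<integral>\<^sup>+y. ennreal (weight s y * (K (x - y))\<^sup>2) \<partial>lborel)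
      \<le> ennreal c * (\<integral>\<^sup>+y. ennreal (weight s x * weight s y * logmaj \<alpha> (x - y)) \<partial>lborel)" for x
  proof -
    have "ennreal (weight s x) * (\<integral>\<^sup>+y. ennreal (weight s y * (K (x - y))\<^sup>2) \<partial>lborel)
        = (\<integral>\<^sup>+y. ennreal (weight s x) * ennreal (weight s y * (K (x - y))\<^sup>2) \<partial>lborel)"
      by (rule nn_integral_cmult[symmetric]) measurable
    also have "\<dots> \<le> (\<integral>\<^sup>+y. ennreal c * ennreal (weight s x * weight s y * logmaj \<alpha> (x - y)) \<partial>lborel)"
    proof (rule nn_integral_mono_AE)
      show "AE y in lborel. ennreal (weight s x) * ennreal (weight s y * (K (x - y))\<^sup>2)
          \<le> ennreal c * ennreal (weight s x * weight s y * logmaj \<alpha> (x - y))"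
        using AE_lborel_singleton[of x]
      proof eventually_elim
        case (elim y)
        then have "weight s x * (weight s y * (K (x - y))\<^sup>2) \<le> weight s x * (weight s y * (c * logmaj \<alpha> (x - y)))"
          using K_bound weight_pos[of s x] weight_pos[of s y] by (intro mult_left_mono) auto
        then show ?case
          using weight_pos[of s x] weight_pos[of s y] c logmaj_nonneg[of \<alpha> "x - y"]
          by (simp add: ennreal_mult[symmetric] ennreal_leI mult_ac)
      qed
    qed
    also have "\<dots> = ennreal c * (\<integral>\<^sup>+y. ennreal (weight s x * weight s y * logmaj \<alpha> (x - y)) \<partial>lborel)"
      by (rule nn_integral_cmult) measurable
    finally show ?thesis .
  qed
  have "(\<integral>\<^sup>+x. ennreal (weight s x) * (\<integral>\<^sup>+y. ennreal (weight s y * (K (x - y))\<^sup>2) \<partial>lborel) \<partial>lborel)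
      \<le> (\<integral>\<^sup>+x. ennreal c * (\<integral>\<^sup>+y. ennreal (weight s x * weight s y * logmaj \<alpha> (x - y)) \<partial>lborel) \<partial>lborel)"
    by (intro nn_integral_mono pointwise)
  also have "\<dots> = ennreal c * (\<integral>\<^sup>+x. \<integral>\<^sup>+y. ennreal (weight s x * weight s y * logmaj \<alpha> (x - y)) \<partial>lborel \<partial>lborel)"
    by (rule nn_integral_cmult) measurable
  also have "\<dots> \<le> ennreal c * ennreal M" using M by (rule mult_left_mono) simp
  finally show ?thesis .
qed

lemma conv_borel_bound:
  fixes K :: "real^2 \<Rightarrow> real" and g :: "real^2 \<Rightarrow> complex"
  assumes [measurable]: "K \<in> borel_measurable borel" "g \<in> borel_measurable borel"
    and c: "c \<ge> 0" and M: "M \<ge> 0" and V: "V \<ge> 0"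
    and K_bound: "\<forall>z. z \<noteq> 0 \<longrightarrow> (K z)\<^sup>2 \<le> c * logmaj \<alpha> z"
    and JM: "(\<integral>\<^sup>+x. \<integral>\<^sup>+y. ennreal (weight s x * weight s y * logmaj \<alpha> (x - y)) \<partial>lborel \<partial>lborel) \<le> ennreal M"
    and g_norm: "(\<integral>\<^sup>+y. ennreal ((1 + (norm y)\<^sup>2) powr s * (cmod (g y))\<^sup>2) \<partial>lborel) = ennreal V"
  defines "G \<equiv> \<lambda>x. LINT y|lborel. complex_of_real (K (x - y)) * g y"
  shows "(\<integral>\<^sup>+x. ennreal (weight s x * (cmod (G x))\<^sup>2) \<partial>lborel) \<le> ennreal (c * M * V)"
    and "AE x in lborel. integrable lborel (\<lambda>y. complex_of_real (K (x - y)) * g y)"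
proof -
  define Q where "Q = (\<lambda>x. \<integral>\<^sup>+y. ennreal (weight s y * (K (x - y))\<^sup>2) \<partial>lborel)"
  have [measurable]: "Q \<in> borel_measurable borel" unfolding Q_def by measurable
  have HS: "(\<integral>\<^sup>+x. ennreal (weight s x) * Q x \<partial>lborel) \<le> ennreal (c * M)"
    using kernel_hilbert_schmidt_bound[OF assms(1) c K_bound JM] c M
    by (simp add: Q_def ennreal_mult)
  have CS: "(\<integral>\<^sup>+y. ennreal (norm (complex_of_real (K (x - y)) * g y)) \<partial>lborel)\<^sup>2 \<le> Q x * ennreal V" for x
    using conv_cauchy_schwarz[OF assms(1,2), of x s] by (simp add: Q_def g_norm)
  have pointwise: "ennreal ((cmod (G x))\<^sup>2) \<le> Q x * ennreal V" for x
  proof -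
    have "ennreal (cmod (G x)) \<le> (\<integral>\<^sup>+y. ennreal (norm (complex_of_real (K (x - y)) * g y)) \<partial>lborel)"
      unfolding G_def by (rule norm_integral_le_nn_integral_norm)
    then have "ennreal (cmod (G x)) ^ 2 \<le> Q x * ennreal V"
      using CS[of x] by (meson power_mono zero_le order_trans)
    then show ?thesis by (simp add: ennreal_power)
  qed
  have "(\<integral>\<^sup>+x. ennreal (weight s x * (cmod (G x))\<^sup>2) \<partial>lborel) \<le> (\<integral>\<^sup>+x. ennreal (weight s x) * Q x * ennreal V \<partial>lborel)"
    using pointwise weight_pos[of s]
    by (intro nn_integral_mono) (simp add: ennreal_mult less_imp_le mult.assoc mult_left_mono)
  also have "\<dots> = (\<integral>\<^sup>+x. ennreal (weight s x) * Q x \<partial>lborel) * ennreal V"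
    by (rule nn_integral_multc) measurable
  also have "\<dots> \<le> ennreal (c * M) * ennreal V" using HS by (rule mult_right_mono) simp
  finally show "(\<integral>\<^sup>+x. ennreal (weight s x * (cmod (G x))\<^sup>2) \<partial>lborel) \<le> ennreal (c * M * V)"
    using c M V by (simp add: ennreal_mult)
  have "AE x in lborel. ennreal (weight s x) * Q x \<noteq> \<infinity>"
    using HS by (intro nn_integral_PInf_AE) (auto simp: top_unique)
  then show "AE x in lborel. integrable lborel (\<lambda>y. complex_of_real (K (x - y)) * g y)"
  proof eventually_elim
    case (elim x)
    then have "Q x * ennreal V < \<infinity>"
      using weight_pos[of s x] by (auto simp: ennreal_mult_eq_top_iff ennreal_mult_less_top top.not_eq_extremum)
    then have "(\<integral>\<^sup>+y. ennreal (norm (complex_of_real (K (x - y)) * g y)) \<partial>lborel)\<^sup>2 < \<infinity>"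
      using CS[of x] by (rule le_less_trans[rotated])
    then show ?case
      by (intro integrableI_bounded) (auto simp: power_less_top_ennreal)
  qed
qed

lemma conv_weighted_bound:
  fixes K :: "real^2 \<Rightarrow> real" and f :: "real^2 \<Rightarrow> complex"
  assumes K_meas[measurable]: "K \<in> borel_measurable borel"
    and c: "c \<ge> 0" and M: "M \<ge> 0"
    and K_bound: "\<forall>z. z \<noteq> 0 \<longrightarrow> (K z)\<^sup>2 \<le> c * logmaj \<alpha> z"
    and JM: "(\<integral>\<^sup>+x. \<integral>\<^sup>+y. ennreal (weight s x * weight s y * logmaj \<alpha> (x - y)) \<partial>lborel \<partial>lborel) \<le> ennreal M"
    and f: "f \<in> Hs s"
  shows "conv K f \<in> Hs (-s)" "Hnorm (-s) (conv K f) \<le> sqrt (c * M) * Hnorm s f"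
    "AE x in lebesgue. integrable lebesgue (\<lambda>y. complex_of_real (K (x - y)) * f y)"
proof -
  obtain g where g_meas[measurable]: "g \<in> borel_measurable borel"
    and fg: "AE y in lebesgue. f y = g y"
    and g_norm: "(\<integral>\<^sup>+y. ennreal ((1 + (norm y)\<^sup>2) powr s * (cmod (g y))\<^sup>2) \<partial>lborel) = ennreal ((Hnorm s f)\<^sup>2)"
    using Hs_borel_representative[OF f] by blast
  have f_meas: "f \<in> borel_measurable lebesgue" using f by (simp add: Hs_def)
  note conv_eq = conv_borel_representative[OF K_meas g_meas f_meas fg]
  note int_transfer = integrable_conv_borel_representative[OF K_meas g_meas f_meas fg]
  define G where "G x = (LINT y|lborel. complex_of_real (K (x - y)) * g y)" for x
  have [measurable]: "G \<in> borel_measurable borel" unfolding G_def by measurable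
  note bound = conv_borel_bound[OF K_meas g_meas c M _ K_bound JM g_norm, folded G_def]
  have int_G: "integrable lborel (\<lambda>x. weight s x * (cmod (G x))\<^sup>2)"
    using bound(1) weight_pos[of s]
    by (intro integrableI_nonneg) (auto simp: less_imp_le top.not_eq_extremum intro: le_less_trans)
  have weighted_G: "(\<lambda>x. (1 + (norm x)\<^sup>2) powr (-s) * (cmod (G x))\<^sup>2) = (\<lambda>x. weight s x * (cmod (G x))\<^sup>2)"
    by (simp add: weight_def)
  show "conv K f \<in> Hs (-s)"
    unfolding conv_eq G_def[symmetric] Hs_def weighted_G
    using int_G by (auto intro: borel_imp_lebesgue_measurable simp: integrable_completion weight_def)
  have "(LINT x|lebesgue. (1 + (norm x)\<^sup>2) powr (- s) * (cmod (G x))\<^sup>2) = (LINT x|lborel. weight s x * (cmod (G x))\<^sup>2)"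
    unfolding weighted_G by (rule integral_completion) measurable
  also have "\<dots> = enn2real (\<integral>\<^sup>+x. ennreal (weight s x * (cmod (G x))\<^sup>2) \<partial>lborel)"
    using weight_pos[of s] by (intro integral_eq_nn_integral) (auto simp: less_imp_le)
  also have "\<dots> \<le> c * M * (Hnorm s f)\<^sup>2" using bound(1) c M by (intro enn2real_leI) auto
  finally have "Hnorm (-s) G \<le> sqrt (c * M * (Hnorm s f)\<^sup>2)"
    unfolding Hnorm_def by (rule real_sqrt_le_mono)
  also have "\<dots> = sqrt (c * M) * Hnorm s f"
    by (simp add: real_sqrt_mult Hnorm_def)
  finally show "Hnorm (-s) (conv K f) \<le> sqrt (c * M) * Hnorm s f"
    unfolding conv_eq G_def[symmetric] .
  show "AE x in lebesgue. integrable lebesgue (\<lambda>y. complex_of_real (K (x - y)) * f y)"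
    using bound(2) by (intro AE_completion) (auto elim!: eventually_mono intro: int_transfer)
qed

lemma Hnorm_cong_AE:
  assumes [measurable]: "F \<in> borel_measurable lebesgue" "G \<in> borel_measurable lebesgue"
    and "AE x in lebesgue. F x = G x"
  shows "Hnorm s' F = Hnorm s' G"
  unfolding Hnorm_def using assms(3)
  by (intro arg_cong[where f=sqrt] integral_cong_AE) (auto elim!: eventually_mono)

definition majorant_exponent :: "real \<Rightarrow> real" where
  "majorant_exponent s = min 1 ((s - 1) / 2)"

definition majorant_constant :: "real \<Rightarrow> real" where
  "majorant_constant s = enn2real (\<integral>\<^sup>+x. \<integral>\<^sup>+y. ennreal (weight s x * weight s y
     * logmaj (majorant_exponent s) (x - y)) \<partial>lborel \<partial>lborel)"

lemma majorant_exponent_bounds: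
  assumes "s > 1"
  shows "0 < majorant_exponent s" "majorant_exponent s \<le> 1" "2 * majorant_exponent s \<le> s - 1"
  using assms by (auto simp: majorant_exponent_def min_def)

lemma majorant_constant_bound:
  assumes "s > 1"
  shows "(\<integral>\<^sup>+x. \<integral>\<^sup>+y. ennreal (weight s x * weight s y * logmaj (majorant_exponent s) (x - y))
      \<partial>lborel \<partial>lborel) \<le> ennreal (majorant_constant s)"
  using weighted_logmaj_finite[OF assms majorant_exponent_bounds[OF assms]]
  by (simp add: majorant_constant_def less_top)

lemma kernel_operator_bound:
  fixes K :: "real^2 \<Rightarrow> real"
  assumes "s > 1" "K \<in> borel_measurable borel" "c \<ge> 0"
    and "\<forall>z. z \<noteq> 0 \<longrightarrow> (K z)\<^sup>2 \<le> c * logmaj (majorant_exponent s) z"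
    and "f \<in> Hs s"
  shows "conv K f \<in> Hs (-s)"
    "Hnorm (-s) (conv K f) \<le> sqrt (c * majorant_constant s) * Hnorm s f"
    "AE x in lebesgue. integrable lebesgue (\<lambda>y. complex_of_real (K (x - y)) * f y)"
proof -
  have "majorant_constant s \<ge> 0" by (simp add: majorant_constant_def)
  note bound = conv_weighted_bound[OF assms(2,3) this assms(4) majorant_constant_bound[OF assms(1)] assms(5)]
  show "conv K f \<in> Hs (-s)" by (rule bound(1))
  show "Hnorm (-s) (conv K f) \<le> sqrt (c * majorant_constant s) * Hnorm s f" by (rule bound(2))
  show "AE x in lebesgue. integrable lebesgue (\<lambda>y. complex_of_real (K (x - y)) * f y)" by (rule bound(3))
qed

lemma conv_diff_AE:
  fixes K L :: "real^2 \<Rightarrow> real"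
  assumes "AE x in lebesgue. integrable lebesgue (\<lambda>y. complex_of_real (K (x - y)) * f y)"
    and "AE x in lebesgue. integrable lebesgue (\<lambda>y. complex_of_real (L (x - y)) * f y)"
  shows "AE x in lebesgue. conv K f x - conv L f x = conv (\<lambda>z. K z - L z) f x"
  using assms
proof eventually_elim
  case (elim x)
  have "conv K f x - conv L f x
      = (LINT y|lebesgue. complex_of_real (K (x - y)) * f y - complex_of_real (L (x - y)) * f y)"
    unfolding conv_def using Bochner_Integration.integral_diff[OF elim] by simp
  also have "\<dots> = conv (\<lambda>z. K z - L z) f x"
    unfolding conv_def by (simp add: algebra_simps)
  finally show ?case .
qed

lemma kker_operator_bound:
  assumes s: "s > 1" and f: "f \<in> Hs s"
  defines "\<alpha> \<equiv> majorant_exponent s"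
  shows "conv kker f \<in> Hs (-s)"
    "Hnorm (-s) (conv kker f) \<le> sqrt (2/(pi\<^sup>2 * \<alpha>\<^sup>2) * majorant_constant s) * Hnorm s f"
    "AE x in lebesgue. integrable lebesgue (\<lambda>y. complex_of_real (kker (x - y)) * f y)"
proof -
  have "\<forall>z. z \<noteq> 0 \<longrightarrow> (kker z)\<^sup>2 \<le> 2/(pi\<^sup>2 * \<alpha>\<^sup>2) * logmaj \<alpha> z"
    using kker_square_le majorant_exponent_bounds(1)[OF s] by (simp add: \<alpha>_def)
  from kernel_operator_bound[OF s kker_borel _ this[unfolded \<alpha>_def] f, folded \<alpha>_def]
  show "conv kker f \<in> Hs (-s)"
    "Hnorm (-s) (conv kker f) \<le> sqrt (2/(pi\<^sup>2 * \<alpha>\<^sup>2) * majorant_constant s) * Hnorm s f"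
    "AE x in lebesgue. integrable lebesgue (\<lambda>y. complex_of_real (kker (x - y)) * f y)"
    by simp_all
qed

lemma klam_operator_bound:
  assumes s: "s > 1" and u: "norm u = 1" and lam: "lam > 0" and f: "f \<in> Hs s"
  shows "conv (klam lam u) f \<in> Hs (-s)"
    "AE x in lebesgue. integrable lebesgue (\<lambda>y. complex_of_real (klam lam u (x - y)) * f y)"
proof -
  define \<alpha> where "\<alpha> = majorant_exponent s"
  have "\<forall>z. z \<noteq> 0 \<longrightarrow> (klam lam u z)\<^sup>2
      \<le> (4/(pi\<^sup>2 * \<alpha>\<^sup>2) + 2 * (lam powr \<alpha> / (pi\<^sup>2 * \<alpha>\<^sup>2))) * logmaj \<alpha> z"
    using klam_square_le u lam majorant_exponent_bounds(1,2)[OF s] by (simp add: \<alpha>_def)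
  from kernel_operator_bound[OF s klam_borel _ this[unfolded \<alpha>_def] f]
  show "conv (klam lam u) f \<in> Hs (-s)"
    "AE x in lebesgue. integrable lebesgue (\<lambda>y. complex_of_real (klam lam u (x - y)) * f y)"
    by simp_all
qed

lemma klam_kker_operator_diff:
  assumes s: "s > 1" and u: "norm u = 1" and lam: "lam > 0" and f: "f \<in> Hs s"
  defines "\<alpha> \<equiv> majorant_exponent s"
  shows "Hnorm (-s) (\<lambda>x. conv (klam lam u) f x - conv kker f x)
    \<le> sqrt (lam powr \<alpha> * (majorant_constant s / (pi\<^sup>2 * \<alpha>\<^sup>2))) * Hnorm s f"
proof -
  have D_meas: "(\<lambda>z. klam lam u z - kker z) \<in> borel_measurable borel" by measurable
  have "\<forall>z. z \<noteq> 0 \<longrightarrow> (klam lam u z - kker z)\<^sup>2 \<le> lam powr \<alpha> / (pi\<^sup>2 * \<alpha>\<^sup>2) * logmaj \<alpha> z"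
    using klam_kker_diff_square_le u lam majorant_exponent_bounds(1,2)[OF s] by (simp add: \<alpha>_def)
  note D = kernel_operator_bound[OF s D_meas _ this[unfolded \<alpha>_def] f, folded \<alpha>_def]
  note k = kker_operator_bound[OF s f] and l = klam_operator_bound[OF s u lam f]
  have "Hnorm (-s) (\<lambda>x. conv (klam lam u) f x - conv kker f x)
      = Hnorm (-s) (conv (\<lambda>z. klam lam u z - kker z) f)"
    using k(1) l(1) D(1) conv_diff_AE[OF l(2) k(3)]
    by (intro Hnorm_cong_AE) (auto simp: Hs_def)
  also have "\<dots> \<le> sqrt (lam powr \<alpha> * (majorant_constant s / (pi\<^sup>2 * \<alpha>\<^sup>2))) * Hnorm s f"
    using D(2) by simp
  finally show ?thesis .
qed

lemma sqrt_powr_small: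
  fixes \<alpha> C :: real
  assumes "\<alpha> > 0" "C \<ge> 0" "\<epsilon> > 0"
  shows "\<exists>\<delta>>0. \<forall>lam. 0 < lam \<and> lam < \<delta> \<longrightarrow> sqrt (lam powr \<alpha> * C) \<le> \<epsilon>"
proof -
  define \<delta> where "\<delta> = (\<epsilon>\<^sup>2 / (C + 1)) powr (1/\<alpha>)"
  have "\<delta> > 0" using assms by (simp add: \<delta>_def)
  moreover have "sqrt (lam powr \<alpha> * C) \<le> \<epsilon>" if lam: "0 < lam" "lam < \<delta>" for lam
  proof -
    have "lam powr \<alpha> \<le> \<delta> powr \<alpha>" using lam assms by (intro powr_mono2) auto
    also have "\<dots> = \<epsilon>\<^sup>2 / (C + 1)" using assms by (simp add: \<delta>_def powr_powr)
    finally have "lam powr \<alpha> * C \<le> \<epsilon>\<^sup>2 / (C + 1) * C" using assms by (intro mult_right_mono)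
    also have "\<dots> \<le> \<epsilon>\<^sup>2" using assms by (simp add: field_simps)
    finally show ?thesis using assms by (simp add: real_le_lsqrt)
  qed
  ultimately show ?thesis by blast
qed

lemma klam_kker_operator_convergence:
  assumes s: "s > 1" and u: "norm u = 1" and eps: "\<epsilon> > 0"
  shows "\<exists>\<delta>>0. \<forall>lam. 0 < lam \<and> lam < \<delta> \<longrightarrow>
      (\<forall>f\<in>Hs s. Hnorm (-s) (\<lambda>x. conv (klam lam u) f x - conv kker f x) \<le> \<epsilon> * Hnorm s f)"
proof -
  define \<alpha> where "\<alpha> = majorant_exponent s"
  define C where "C = majorant_constant s / (pi\<^sup>2 * \<alpha>\<^sup>2)"
  have "C \<ge> 0" by (simp add: C_def majorant_constant_def)
  then obtain \<delta> where "\<delta> > 0"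
    and small: "\<And>lam. 0 < lam \<Longrightarrow> lam < \<delta> \<Longrightarrow> sqrt (lam powr \<alpha> * C) \<le> \<epsilon>"
    using sqrt_powr_small[OF majorant_exponent_bounds(1)[OF s, folded \<alpha>_def] _ eps] by blast
  have "Hnorm (-s) (\<lambda>x. conv (klam lam u) f x - conv kker f x) \<le> \<epsilon> * Hnorm s f"
    if lam: "0 < lam" "lam < \<delta>" and f: "f \<in> Hs s" for lam f
  proof -
    have "Hnorm (-s) (\<lambda>x. conv (klam lam u) f x - conv kker f x) \<le> sqrt (lam powr \<alpha> * C) * Hnorm s f"
      using klam_kker_operator_diff[OF s u lam(1) f] by (simp add: \<alpha>_def C_def)
    also have "\<dots> \<le> \<epsilon> * Hnorm s f"
      using small[OF lam] by (rule mult_right_mono) (simp add: Hnorm_def)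
    finally show ?thesis .
  qed
  with \<open>\<delta> > 0\<close> show ?thesis by blast
qed

theorem corollary3p1:
  fixes s :: real and u :: "real^2"
  assumes "s > 1" and "norm u = 1"
  shows "(\<forall>f\<in>Hs s. conv kker f \<in> Hs (-s)) \<and>
         (\<exists>C. \<forall>f\<in>Hs s. Hnorm (-s) (conv kker f) \<le> C * Hnorm s f) \<and>
         (\<forall>lam>0. \<forall>f\<in>Hs s. conv (klam lam u) f \<in> Hs (-s)) \<and>
         (\<forall>\<epsilon>>0. \<exists>\<delta>>0. \<forall>lam. 0 < lam \<and> lam < \<delta> \<longrightarrow>
            (\<forall>f\<in>Hs s. Hnorm (-s) (\<lambda>x. conv (klam lam u) f x - conv kker f x)
                         \<le> \<epsilon> * Hnorm s f))"
  using kker_operator_bound(1,2)[OF assms(1)] klam_operator_bound(1)[OF assms]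
    klam_kker_operator_convergence[OF assms]
  by blast

end
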